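(* Let $\lambda_A:{\mathcal U}_A^{\ge0}\otimes{\mathcal U}_q^{c_m}\to{\mathcal U}_A^{\ge0}$ be the linear map $\lambda_A(u\otimes v)=\mathrm{ad}(\pi_A(u))(v)$. Then $\mathrm{Im}(\lambda_A)\subseteq{\mathcal U}_q^{c_m}$, and $\lambda_A$ endows ${\mathcal U}_q^{c_m}$ with the structure of a left ${\mathcal U}_A^{\ge0}$-module algebra.
   Context: $k$ algebraically closed of characteristic $0$, $q\in k^\times$ not a root of unity, $\hat q=q-q^{-1}$, $m>1$, $[u,v]=uv-q^{-1}vu$. $Q(A_m)$ is the lattice of $(a_1,\dots,a_{m+1})\in\mathbb Z^{m+1}$ with $\sum a_i=0$, standard inner product, simple roots $\alpha_i=e_i-e_{i+1}$, reflections $s_i$. ${\mathcal U}_q(\mathfrak{sl}_{m+1})$ is generated by $E_i,F_i$ ($1\le i\le m$), $K_\mu$ with relations $K_0=1$, $K_\mu K_\lambda=K_{\mu+\lambda}$, $K_\mu E_i=q^{\langle\mu,\alpha_i\rangle}E_iK_\mu$, $K_\mu F_i=q^{-\langle\mu,\alpha_i\rangle}F_iK_\mu$, $E_iE_j=E_jE_i$, $F_iF_j=F_jF_i$ if $\langle\alpha_i,\alpha_j\rangle\in\{0,2\}$, $E_i[E_i,E_j]=q[E_i,E_j]E_i$, $F_i[F_i,F_j]=q[F_i,F_j]F_i$ if $\langle\alpha_i,\alpha_j\rangle=-1$, $E_iF_j-F_jE_i=\delta_{ij}(K_{\alpha_i}-K_{-\alpha_i})/\hat q$; Hopf structure $\Delta(E_i)=K_{-\alpha_i}\otimes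 E_i+E_i\otimes1$, $\Delta(K_\mu)=K_\mu\otimes K_\mu$, $\Delta(F_i)=1\otimes F_i+F_i\otimes K_{\alpha_i}$, $S(E_i)=-K_{\alpha_i}E_i$, $S(K_\mu)=K_{-\mu}$, $\epsilon(E_i)=0$, $\epsilon(K_\mu)=1$; Lusztig automorphisms $T_iK_\mu=K_{s_i\mu}$, $T_iE_i=-F_iK_{\alpha_i}$, $T_iE_j=E_j$ if $\langle\alpha_i,\alpha_j\rangle=0$, $T_iE_j=E_iE_j-q^{-1}E_jE_i$ if $\langle\alpha_i,\alpha_j\rangle=-1$. ${\mathcal U}_q^{c_m}$ is the subalgebra generated by $z_j=T_1\cdots T_{j-1}E_j$ ($1\le j\le m$) for $c_m=s_1\cdots s_m$. ${\mathcal U}_A^{\ge0}$ is the Hopf subalgebra generated by the $E_i$ and $K_\mu$. $\pi_A:{\mathcal U}_A^{\ge0}\to{\mathcal U}_A^{\ge0}$ is the algebra map with $\pi_A(E_1)=0$, $\pi_A(E_i)=E_i$ ($1<i\le m$), $\pi_A(K_\mu)=K_\mu$. $\mathrm{ad}(h)(u)=\sum h_{(1)}uS(h_{(2)})$. *)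

theory Defs
  imports "HOL-Computational_Algebra.Polynomial"
begin

text \<open>Weights mu in Z^(m+1) are encoded as functions nat => int, coordinate i for i in 1..m+1.\<close>

definition in_root_lattice :: "nat \<Rightarrow> (nat \<Rightarrow> int) \<Rightarrow> bool" where
  "in_root_lattice m mu \<longleftrightarrow> (\<forall>i. mu i \<noteq> 0 \<longrightarrow> 1 \<le> i \<and> i \<le> m + 1) \<and> (\<Sum>i=1..m+1. mu i) = 0"

definition ipr :: "nat \<Rightarrow> (nat \<Rightarrow> int) \<Rightarrow> (nat \<Rightarrow> int) \<Rightarrow> int" where
  "ipr m mu la = (\<Sum>i=1..m+1. mu i * la i)"

definition alpha :: "nat \<Rightarrow> nat \<Rightarrow> int" where
  "alpha i = (\<lambda>j. if j = i then 1 else if j = i + 1 then -1 else 0)"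

definition wplus :: "(nat \<Rightarrow> int) \<Rightarrow> (nat \<Rightarrow> int) \<Rightarrow> nat \<Rightarrow> int" where
  "wplus mu la = (\<lambda>j. mu j + la j)"

definition wneg :: "(nat \<Rightarrow> int) \<Rightarrow> nat \<Rightarrow> int" where
  "wneg mu = (\<lambda>j. - mu j)"

definition refl_s :: "nat \<Rightarrow> nat \<Rightarrow> (nat \<Rightarrow> int) \<Rightarrow> nat \<Rightarrow> int" where
  "refl_s m i mu = (\<lambda>j. mu j - ipr m mu (alpha i) * alpha i j)"

datatype gen = E nat | F nat | K "nat \<Rightarrow> int"

datatype 'k fexpr = Gen gen | Scal 'k | Add "'k fexpr" "'k fexpr" | Mul "'k fexpr" "'k fexpr"

definition smult :: "'k \<Rightarrow> 'k fexpr \<Rightarrow> 'k fexpr" where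
  "smult c x = Mul (Scal c) x"

definition sub :: "'k::ring_1 fexpr \<Rightarrow> 'k fexpr \<Rightarrow> 'k fexpr" where
  "sub x y = Add x (Mul (Scal (-1)) y)"

definition one :: "'k::one fexpr" where "one = Scal 1"

definition valid_gen :: "nat \<Rightarrow> gen \<Rightarrow> bool" where
  "valid_gen m g = (case g of E i \<Rightarrow> 1 \<le> i \<and> i \<le> m | F i \<Rightarrow> 1 \<le> i \<and> i \<le> m
                    | K mu \<Rightarrow> in_root_lattice m mu)"

definition qbr :: "'k::field \<Rightarrow> 'k fexpr \<Rightarrow> 'k fexpr \<Rightarrow> 'k fexpr" where
  "qbr q u v = sub (Mul u v) (smult (inverse q) (Mul v u))"

definition qhat :: "'k::field \<Rightarrow> 'k" where "qhat q = q - inverse q"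

inductive Urel :: "nat \<Rightarrow> 'k::field \<Rightarrow> 'k fexpr \<Rightarrow> 'k fexpr \<Rightarrow> bool" for m q where
  junk: "\<not> valid_gen m g \<Longrightarrow> Urel m q (Gen g) (Scal 0)"
| K0: "Urel m q (Gen (K (\<lambda>_. 0))) one"
| KK: "in_root_lattice m mu \<Longrightarrow> in_root_lattice m la \<Longrightarrow>
        Urel m q (Mul (Gen (K mu)) (Gen (K la))) (Gen (K (wplus mu la)))"
| KE: "in_root_lattice m mu \<Longrightarrow> 1 \<le> i \<Longrightarrow> i \<le> m \<Longrightarrow>
        Urel m q (Mul (Gen (K mu)) (Gen (E i)))
                 (smult (q powi ipr m mu (alpha i)) (Mul (Gen (E i)) (Gen (K mu))))"
| KF: "in_root_lattice m mu \<Longrightarrow> 1 \<le> i \<Longrightarrow> i \<le> m \<Longrightarrow>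
        Urel m q (Mul (Gen (K mu)) (Gen (F i)))
                 (smult (q powi (- ipr m mu (alpha i))) (Mul (Gen (F i)) (Gen (K mu))))"
| EEcomm: "1 \<le> i \<Longrightarrow> i \<le> m \<Longrightarrow> 1 \<le> j \<Longrightarrow> j \<le> m \<Longrightarrow> ipr m (alpha i) (alpha j) \<in> {0, 2} \<Longrightarrow>
        Urel m q (Mul (Gen (E i)) (Gen (E j))) (Mul (Gen (E j)) (Gen (E i)))"
| FFcomm: "1 \<le> i \<Longrightarrow> i \<le> m \<Longrightarrow> 1 \<le> j \<Longrightarrow> j \<le> m \<Longrightarrow> ipr m (alpha i) (alpha j) \<in> {0, 2} \<Longrightarrow>
        Urel m q (Mul (Gen (F i)) (Gen (F j))) (Mul (Gen (F j)) (Gen (F i)))"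
| EEserre: "1 \<le> i \<Longrightarrow> i \<le> m \<Longrightarrow> 1 \<le> j \<Longrightarrow> j \<le> m \<Longrightarrow> ipr m (alpha i) (alpha j) = -1 \<Longrightarrow>
        Urel m q (Mul (Gen (E i)) (qbr q (Gen (E i)) (Gen (E j))))
                 (smult q (Mul (qbr q (Gen (E i)) (Gen (E j))) (Gen (E i))))"
| FFserre: "1 \<le> i \<Longrightarrow> i \<le> m \<Longrightarrow> 1 \<le> j \<Longrightarrow> j \<le> m \<Longrightarrow> ipr m (alpha i) (alpha j) = -1 \<Longrightarrow>
        Urel m q (Mul (Gen (F i)) (qbr q (Gen (F i)) (Gen (F j))))
                 (smult q (Mul (qbr q (Gen (F i)) (Gen (F j))) (Gen (F i))))"
| EF: "1 \<le> i \<Longrightarrow> i \<le> m \<Longrightarrow> 1 \<le> j \<Longrightarrow> j \<le> m \<Longrightarrow>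
        Urel m q (sub (Mul (Gen (E i)) (Gen (F j))) (Mul (Gen (F j)) (Gen (E i))))
                 (if i = j then smult (inverse (qhat q))
                      (sub (Gen (K (alpha i))) (Gen (K (wneg (alpha i))))) else Scal 0)"

text \<open>Equality in U_q(sl_(m+1)): the least congruence on expressions containing the axioms of a
  unital associative k-algebra (Scal c = c*1) and the defining relations. Quotienting the
  expressions by it yields exactly U_q(sl_(m+1)).\<close>

inductive Ueq :: "nat \<Rightarrow> 'k::field \<Rightarrow> 'k fexpr \<Rightarrow> 'k fexpr \<Rightarrow> bool" for m q where
  rel: "Urel m q x y \<Longrightarrow> Ueq m q x y"
| refl: "Ueq m q x x"
| sym: "Ueq m q x y \<Longrightarrow> Ueq m q y x"
| trans: "Ueq m q x y \<Longrightarrow> Ueq m q y z \<Longrightarrow> Ueq m q x z"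
| add_cong: "Ueq m q x x' \<Longrightarrow> Ueq m q y y' \<Longrightarrow> Ueq m q (Add x y) (Add x' y')"
| mul_cong: "Ueq m q x x' \<Longrightarrow> Ueq m q y y' \<Longrightarrow> Ueq m q (Mul x y) (Mul x' y')"
| add_assoc: "Ueq m q (Add (Add x y) z) (Add x (Add y z))"
| add_comm: "Ueq m q (Add x y) (Add y x)"
| add_zero: "Ueq m q (Add x (Scal 0)) x"
| add_inv: "Ueq m q (Add x (Mul (Scal (-1)) x)) (Scal 0)"
| mul_assoc: "Ueq m q (Mul (Mul x y) z) (Mul x (Mul y z))"
| mul_one_l: "Ueq m q (Mul (Scal 1) x) x"
| mul_one_r: "Ueq m q (Mul x (Scal 1)) x"
| distrib_l: "Ueq m q (Mul x (Add y z)) (Add (Mul x y) (Mul x z))"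
| distrib_r: "Ueq m q (Mul (Add x y) z) (Add (Mul x z) (Mul y z))"
| scal_add: "Ueq m q (Scal (a + b)) (Add (Scal a) (Scal b))"
| scal_mul: "Ueq m q (Scal (a * b)) (Mul (Scal a) (Scal b))"
| scal_central: "Ueq m q (Mul (Scal a) x) (Mul x (Scal a))"

section \<open>Hopf structure, on representatives\<close>

text \<open>Coproduct as a formal sum of pure tensors (coefficient, left factor, right factor).\<close>

definition Delta_gen :: "nat \<Rightarrow> gen \<Rightarrow> ('k::field \<times> 'k fexpr \<times> 'k fexpr) list" where
  "Delta_gen m g = (if \<not> valid_gen m g then [] else
     (case g of
        E i \<Rightarrow> [(1, Gen (K (wneg (alpha i))), Gen (E i)), (1, Gen (E i), one)]
      | F i \<Rightarrow> [(1, one, Gen (F i)), (1, Gen (F i), Gen (K (alpha i)))]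
      | K mu \<Rightarrow> [(1, Gen (K mu), Gen (K mu))]))"

primrec Delta :: "nat \<Rightarrow> 'k::field fexpr \<Rightarrow> ('k \<times> 'k fexpr \<times> 'k fexpr) list" where
  "Delta m (Gen g) = Delta_gen m g"
| "Delta m (Scal c) = [(c, one, one)]"
| "Delta m (Add x y) = Delta m x @ Delta m y"
| "Delta m (Mul x y) = concat (map (\<lambda>(c, x1, x2). map (\<lambda>(d, y1, y2). (c * d, Mul x1 y1, Mul x2 y2)) (Delta m y)) (Delta m x))"

definition antipode_gen :: "nat \<Rightarrow> gen \<Rightarrow> 'k::field fexpr" where
  "antipode_gen m g = (if \<not> valid_gen m g then Scal 0 else
     (case g of
        E i \<Rightarrow> smult (-1) (Mul (Gen (K (alpha i))) (Gen (E i)))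
      | F i \<Rightarrow> smult (-1) (Mul (Gen (F i)) (Gen (K (wneg (alpha i)))))
      | K mu \<Rightarrow> Gen (K (wneg mu))))"

primrec antipode :: "nat \<Rightarrow> 'k::field fexpr \<Rightarrow> 'k fexpr" where
  "antipode m (Gen g) = antipode_gen m g"
| "antipode m (Scal c) = Scal c"
| "antipode m (Add x y) = Add (antipode m x) (antipode m y)"
| "antipode m (Mul x y) = Mul (antipode m y) (antipode m x)"

definition counit_gen :: "nat \<Rightarrow> gen \<Rightarrow> 'k::field" where
  "counit_gen m g = (if \<not> valid_gen m g then 0 else
     (case g of E i \<Rightarrow> 0 | F i \<Rightarrow> 0 | K mu \<Rightarrow> 1))"

primrec counit :: "nat \<Rightarrow> 'k::field fexpr \<Rightarrow> 'k" where
  "counit m (Gen g) = counit_gen m g"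
| "counit m (Scal c) = c"
| "counit m (Add x y) = counit m x + counit m y"
| "counit m (Mul x y) = counit m x * counit m y"

definition esum :: "'k::zero fexpr list \<Rightarrow> 'k fexpr" where
  "esum xs = foldr Add xs (Scal 0)"

definition ad :: "nat \<Rightarrow> 'k::field fexpr \<Rightarrow> 'k fexpr \<Rightarrow> 'k fexpr" where
  "ad m h u = esum (map (\<lambda>(c, h1, h2). smult c (Mul (Mul h1 u) (antipode m h2))) (Delta m h))"

definition T_gen :: "nat \<Rightarrow> 'k::field \<Rightarrow> nat \<Rightarrow> gen \<Rightarrow> 'k fexpr" where
  "T_gen m q i g = (case g of
       K mu \<Rightarrow> Gen (K (refl_s m i mu))
     | E j \<Rightarrow> (if \<not> (1 \<le> j \<and> j \<le> m) then Gen (E j)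
               else if j = i then smult (-1) (Mul (Gen (F i)) (Gen (K (alpha i))))
               else if ipr m (alpha i) (alpha j) = -1
                 then sub (Mul (Gen (E i)) (Gen (E j))) (smult (inverse q) (Mul (Gen (E j)) (Gen (E i))))
               else Gen (E j))
     | F j \<Rightarrow> (if \<not> (1 \<le> j \<and> j \<le> m) then Gen (F j)
               else if j = i then smult (-1) (Mul (Gen (K (wneg (alpha i)))) (Gen (E i)))
               else if ipr m (alpha i) (alpha j) = -1
                 then sub (Mul (Gen (F j)) (Gen (F i))) (smult q (Mul (Gen (F i)) (Gen (F j))))
               else Gen (F j)))"

primrec Tl :: "nat \<Rightarrow> 'k::field \<Rightarrow> nat \<Rightarrow> 'k fexpr \<Rightarrow> 'k fexpr" where
  "Tl m q i (Gen g) = T_gen m q i g"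
| "Tl m q i (Scal c) = Scal c"
| "Tl m q i (Add x y) = Add (Tl m q i x) (Tl m q i y)"
| "Tl m q i (Mul x y) = Mul (Tl m q i x) (Tl m q i y)"

definition zgen :: "nat \<Rightarrow> 'k::field \<Rightarrow> nat \<Rightarrow> 'k fexpr" where
  "zgen m q j = foldr (Tl m q) [1..<j] (Gen (E j))"

primrec piA :: "'k fexpr \<Rightarrow> 'k::zero fexpr" where
  "piA (Gen g) = (if g = E 1 then Scal 0 else Gen g)"
| "piA (Scal c) = Scal c"
| "piA (Add x y) = Add (piA x) (piA y)"
| "piA (Mul x y) = Mul (piA x) (piA y)"

inductive_set subalg :: "'k fexpr set \<Rightarrow> 'k fexpr set" for G where
  scal: "Scal c \<in> subalg G"
| gen: "x \<in> G \<Longrightarrow> x \<in> subalg G"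
| add: "x \<in> subalg G \<Longrightarrow> y \<in> subalg G \<Longrightarrow> Add x y \<in> subalg G"
| mul: "x \<in> subalg G \<Longrightarrow> y \<in> subalg G \<Longrightarrow> Mul x y \<in> subalg G"

definition Uge :: "nat \<Rightarrow> 'k fexpr set" where
  "Uge m = subalg ({Gen (E i) | i. 1 \<le> i \<and> i \<le> m} \<union> {Gen (K mu) | mu. in_root_lattice m mu})"

definition Ucm :: "nat \<Rightarrow> 'k::field \<Rightarrow> 'k fexpr set" where
  "Ucm m q = subalg {zgen m q j | j. 1 \<le> j \<and> j \<le> m}"

definition lamA :: "nat \<Rightarrow> 'k::field fexpr \<Rightarrow> 'k fexpr \<Rightarrow> 'k fexpr" where
  "lamA m u v = ad m (piA u) v"

definition alg_closed_field :: "'k::field itself \<Rightarrow> bool" where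
  "alg_closed_field _ \<longleftrightarrow> (\<forall>p :: 'k poly. degree p > 0 \<longrightarrow> (\<exists>x. poly p x = 0))"

end

theory Submission
  imports Defs
begin

text \<open>
  The adjoint action \<open>ad(h)\<close> descends to \<open>'k free\<close>, is linear, multiplicative in \<open>h\<close>
  (\<open>ad(hh') = ad(h) ad(h')\<close>), and on generators it is explicit:
  \<open>ad(K_mu)(u) = K_mu u K_(-mu)\<close> and \<open>ad(E_i)(u) = E_i u - K_(-alpha_i) u K_(alpha_i) E_i\<close>.
  From these formulas one gets the twisted Leibniz rules, hence the module-algebra axioms by
  induction over \<open>U_A^(\<ge>0)\<close>.  The substance of the theorem is that \<open>U_q^(c_m)\<close> is stable under
  \<open>ad(K_mu)\<close> (because \<open>z_j\<close> is a weight vector) and under \<open>ad(E_i)\<close> for \<open>i \<ge> 2\<close>: using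
  \<open>z_(j+1) = [z_j, E_(j+1)]\<close>, the Serre relations and commutation of distant \<open>E_i\<close>, one shows that
  \<open>ad(E_i)(z_j)\<close> is \<open>0\<close>, a multiple of \<open>z_i\<close>, or a Serre-type element lying in the ideal.
  Since \<open>\<pi>_A\<close> kills \<open>E_1\<close>, this covers all generators of \<open>\<pi>_A(U_A^(\<ge>0))\<close>.
\<close>

section \<open>The free unital associative algebra\<close>

inductive alg_eq :: "'k::field fexpr \<Rightarrow> 'k fexpr \<Rightarrow> bool" where
  refl: "alg_eq x x"
| sym: "alg_eq x y \<Longrightarrow> alg_eq y x"
| trans: "alg_eq x y \<Longrightarrow> alg_eq y z \<Longrightarrow> alg_eq x z"
| add_cong: "alg_eq x x' \<Longrightarrow> alg_eq y y' \<Longrightarrow> alg_eq (Add x y) (Add x' y')"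
| mul_cong: "alg_eq x x' \<Longrightarrow> alg_eq y y' \<Longrightarrow> alg_eq (Mul x y) (Mul x' y')"
| add_assoc: "alg_eq (Add (Add x y) z) (Add x (Add y z))"
| add_comm: "alg_eq (Add x y) (Add y x)"
| add_zero: "alg_eq (Add x (Scal 0)) x"
| add_inv: "alg_eq (Add x (Mul (Scal (-1)) x)) (Scal 0)"
| mul_assoc: "alg_eq (Mul (Mul x y) z) (Mul x (Mul y z))"
| mul_one_l: "alg_eq (Mul (Scal 1) x) x"
| mul_one_r: "alg_eq (Mul x (Scal 1)) x"
| distrib_l: "alg_eq (Mul x (Add y z)) (Add (Mul x y) (Mul x z))"
| distrib_r: "alg_eq (Mul (Add x y) z) (Add (Mul x z) (Mul y z))"
| scal_add: "alg_eq (Scal (a + b)) (Add (Scal a) (Scal b))"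
| scal_mul: "alg_eq (Scal (a * b)) (Mul (Scal a) (Scal b))"
| scal_central: "alg_eq (Mul (Scal a) x) (Mul x (Scal a))"

lemma alg_eq_Ueq: "alg_eq x y \<Longrightarrow> Ueq m q x y"
  by (induction rule: alg_eq.induct) (auto intro: Ueq.intros)

text \<open>Evaluation at the zero algebra map \<open>Gen g \<mapsto> 0\<close>; it separates \<open>0\<close> from \<open>1\<close>.\<close>

primrec const_term :: "'k::field fexpr \<Rightarrow> 'k" where
  "const_term (Gen g) = 0"
| "const_term (Scal c) = c"
| "const_term (Add x y) = const_term x + const_term y"
| "const_term (Mul x y) = const_term x * const_term y"

lemma alg_eq_const_term: "alg_eq x y \<Longrightarrow> const_term x = const_term y"
  by (induction rule: alg_eq.induct) (auto simp: algebra_simps)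

quotient_type (overloaded) 'k free = "'k::field fexpr" / alg_eq
  morphisms rep_free abs_free
  by (rule equivpI) (auto simp: reflp_def symp_def transp_def intro: alg_eq.intros)

instantiation free :: (field) ring_1
begin
lift_definition zero_free :: "'a free" is "Scal 0" .
lift_definition one_free :: "'a free" is "Scal 1" .
lift_definition plus_free :: "'a free \<Rightarrow> 'a free \<Rightarrow> 'a free" is Add
  by (rule alg_eq.add_cong)
lift_definition times_free :: "'a free \<Rightarrow> 'a free \<Rightarrow> 'a free" is Mul
  by (rule alg_eq.mul_cong)
lift_definition uminus_free :: "'a free \<Rightarrow> 'a free" is "\<lambda>x. Mul (Scal (-1)) x"
  by (rule alg_eq.mul_cong[OF alg_eq.refl])
lift_definition minus_free :: "'a free \<Rightarrow> 'a free \<Rightarrow> 'a free" is "\<lambda>x y. Add x (Mul (Scal (-1)) y)"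
  by (rule alg_eq.add_cong, assumption, rule alg_eq.mul_cong[OF alg_eq.refl])
instance
proof
  fix a b c :: "'a free"
  show "a + b + c = a + (b + c)" by transfer (rule alg_eq.add_assoc)
  show "a + b = b + a" by transfer (rule alg_eq.add_comm)
  show "0 + a = a" by transfer (meson alg_eq.add_comm alg_eq.add_zero alg_eq.trans)
  show "- a + a = 0" by transfer (meson alg_eq.add_comm alg_eq.add_inv alg_eq.trans)
  show "a - b = a + - b" by transfer (rule alg_eq.refl)
  show "a * b * c = a * (b * c)" by transfer (rule alg_eq.mul_assoc)
  show "(a + b) * c = a * c + b * c" by transfer (rule alg_eq.distrib_r)
  show "a * (b + c) = a * b + a * c" by transfer (rule alg_eq.distrib_l)
  show "1 * a = a" by transfer (rule alg_eq.mul_one_l)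
  show "a * 1 = a" by transfer (rule alg_eq.mul_one_r)
  show "(0::'a free) \<noteq> 1" by transfer (auto dest: alg_eq_const_term)
qed
end

lift_definition sc :: "'k::field \<Rightarrow> 'k free" is Scal .

lemma sc_add: "sc (a + b) = sc a + sc b" by transfer (rule alg_eq.scal_add)
lemma sc_mult: "sc (a * b) = sc a * sc b" by transfer (rule alg_eq.scal_mul)
lemma sc_central: "sc a * x = x * sc a" by transfer (rule alg_eq.scal_central)
lemma sc_0[simp]: "sc 0 = 0" by transfer (rule alg_eq.refl)
lemma sc_1[simp]: "sc 1 = 1" by transfer (rule alg_eq.refl)
lemma sc_neg1: "sc (-1) * x = - x" by transfer (rule alg_eq.refl)

lemma sc_left_comm: "a * (sc d * x) = sc d * (a * x)"
  by (simp only: mult.assoc[symmetric] sc_central[of d a])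
lemma sc_sc_comm: "sc a * (sc c * x) = sc c * (sc a * x)"
  by (simp add: mult.assoc[symmetric] sc_mult[symmetric] mult.commute)

lemma abs_Add[simp]: "abs_free (Add x y) = abs_free x + abs_free y" by (simp add: plus_free.abs_eq)
lemma abs_Mul[simp]: "abs_free (Mul x y) = abs_free x * abs_free y" by (simp add: times_free.abs_eq)
lemma abs_Scal[simp]: "abs_free (Scal c) = sc c" by (simp add: sc.abs_eq)
lemma abs_one[simp]: "abs_free (one :: 'k::field fexpr) = 1" by (simp add: one_def)
lemma abs_smult[simp]: "abs_free (smult c x) = sc c * abs_free x" by (simp add: smult_def)
lemma abs_sub[simp]: "abs_free (sub x y) = abs_free x - abs_free y" by (simp add: sub_def sc_neg1)
lemma abs_esum: "abs_free (esum xs) = sum_list (map abs_free xs)"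
  by (induction xs) (simp_all add: esum_def)

lemma Ueq_of_abs: "abs_free x = abs_free y \<Longrightarrow> Ueq m q x y"
  by (simp add: free.abs_eq_iff alg_eq_Ueq)

section \<open>Polynomial identities in the free algebra\<close>

text \<open>Two such lists
  with the same coefficient for every word evaluate to the same element of any \<open>'k free\<close>; this
  turns each polynomial identity needed below into a finite coefficient comparison.\<close>

type_synonym 'k ncpoly = "('k \<times> nat list) list"

definition eval_nc :: "(nat \<Rightarrow> 'k::field free) \<Rightarrow> 'k ncpoly \<Rightarrow> 'k free" where
  "eval_nc \<sigma> p = sum_list (map (\<lambda>(c, w). sc c * prod_list (map \<sigma> w)) p)"

definition coeff_nc :: "'k::field ncpoly \<Rightarrow> nat list \<Rightarrow> 'k" where
  "coeff_nc p w = sum_list (map (\<lambda>(c, v). if v = w then c else 0) p)"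

definition var_nc :: "nat \<Rightarrow> 'k::field ncpoly" where "var_nc i = [(1, [i])]"

definition mul_nc :: "'k::field ncpoly \<Rightarrow> 'k ncpoly \<Rightarrow> 'k ncpoly" (infixl "\<star>" 70) where
  "p \<star> p' = concat (map (\<lambda>(c, v). map (\<lambda>(d, u). (c * d, v @ u)) p') p)"

definition smul_nc :: "'k::field \<Rightarrow> 'k ncpoly \<Rightarrow> 'k ncpoly" where
  "smul_nc c p = map (\<lambda>(d, u). (c * d, u)) p"

definition add_nc :: "'k::field ncpoly \<Rightarrow> 'k ncpoly \<Rightarrow> 'k ncpoly" (infixl "\<oplus>" 65) where
  "p \<oplus> p' = p @ p'"

definition sub_nc :: "'k::field ncpoly \<Rightarrow> 'k ncpoly \<Rightarrow> 'k ncpoly" (infixl "\<ominus>" 65) where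
  "p \<ominus> p' = p @ smul_nc (-1) p'"

lemmas nc_defs = mul_nc_def smul_nc_def add_nc_def sub_nc_def var_nc_def coeff_nc_def

lemma eval_nc_Cons: "eval_nc \<sigma> ((c, v) # p) = sc c * prod_list (map \<sigma> v) + eval_nc \<sigma> p"
  by (simp add: eval_nc_def)

lemma eval_nc_append: "eval_nc \<sigma> (p @ p') = eval_nc \<sigma> p + eval_nc \<sigma> p'"
  by (simp add: eval_nc_def)

lemma eval_nc_add[simp]: "eval_nc \<sigma> (p \<oplus> p') = eval_nc \<sigma> p + eval_nc \<sigma> p'"
  by (simp add: add_nc_def eval_nc_append)

lemma eval_nc_smul[simp]: "eval_nc \<sigma> (smul_nc c p) = sc c * eval_nc \<sigma> p"
  by (induction p) (auto simp: eval_nc_def smul_nc_def sc_mult distrib_left mult.assoc)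

lemma eval_nc_sub[simp]: "eval_nc \<sigma> (p \<ominus> p') = eval_nc \<sigma> p - eval_nc \<sigma> p'"
  by (simp add: sub_nc_def eval_nc_append sc_neg1)

lemma eval_nc_var[simp]: "eval_nc \<sigma> (var_nc i) = \<sigma> i"
  by (simp add: var_nc_def eval_nc_def)

lemma eval_nc_mul_monomial:
  "eval_nc \<sigma> (map (\<lambda>(d, u). (c * d, v @ u)) p) = sc c * prod_list (map \<sigma> v) * eval_nc \<sigma> p"
proof (induction p)
  case (Cons a p)
  obtain d u where a: "a = (d, u)" by fastforce
  have "sc (c * d) * prod_list (map \<sigma> (v @ u))
      = sc c * prod_list (map \<sigma> v) * (sc d * prod_list (map \<sigma> u))"
    by (simp add: sc_mult mult.assoc sc_left_comm[of "prod_list (map \<sigma> v)"])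
  then show ?case using Cons by (simp add: a eval_nc_Cons algebra_simps)
qed (simp add: eval_nc_def)

lemma eval_nc_mul[simp]: "eval_nc \<sigma> (p \<star> p') = eval_nc \<sigma> p * eval_nc \<sigma> p'"
proof (induction p)
  case (Cons a p)
  obtain c v where a: "a = (c, v)" by fastforce
  have "(a # p) \<star> p' = map (\<lambda>(d, u). (c * d, v @ u)) p' @ (p \<star> p')"
    by (simp add: mul_nc_def a)
  then show ?case
    using Cons by (simp add: eval_nc_append eval_nc_mul_monomial a eval_nc_Cons distrib_right)
qed (simp add: mul_nc_def eval_nc_def)

lemma coeff_nc_notin: "w \<notin> snd ` set p \<Longrightarrow> coeff_nc p w = 0"
  by (induction p) (auto simp: coeff_nc_def)

lemma eval_nc_by_coeff:
  "eval_nc \<sigma> p = (\<Sum>w\<in>snd ` set p. sc (coeff_nc p w) * prod_list (map \<sigma> w))"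
proof (induction p)
  case (Cons a p)
  obtain c v where a: "a = (c, v)" by fastforce
  let ?S = "snd ` set p"
  let ?f = "\<lambda>w. sc (coeff_nc p w) * prod_list (map \<sigma> w)"
  let ?g = "\<lambda>w. sc (if v = w then c else 0) * prod_list (map \<sigma> w)"
  have "(\<Sum>w\<in>insert v ?S. sc (coeff_nc ((c, v) # p) w) * prod_list (map \<sigma> w))
      = (\<Sum>w\<in>insert v ?S. ?g w) + (\<Sum>w\<in>insert v ?S. ?f w)"
    by (simp add: coeff_nc_def sc_add distrib_right sum.distrib)
  also have "(\<Sum>w\<in>insert v ?S. ?g w) = sc c * prod_list (map \<sigma> v)"
    by (subst sum.remove[of _ v]) (auto intro!: sum.neutral split: if_splits)
  also have "(\<Sum>w\<in>insert v ?S. ?f w) = (\<Sum>w\<in>?S. ?f w)"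
    by (cases "v \<in> ?S") (auto simp: insert_absorb coeff_nc_notin)
  finally show ?case using Cons by (simp add: a eval_nc_Cons)
qed (simp add: eval_nc_def)

lemma eval_nc_eqI:
  assumes "\<forall>w \<in> snd ` set p \<union> snd ` set p'. coeff_nc p w = coeff_nc p' w"
  shows "eval_nc \<sigma> p = eval_nc \<sigma> p'"
proof -
  let ?W = "snd ` set p \<union> snd ` set p'"
  have same: "coeff_nc p w = coeff_nc p' w" for w
    using assms by (cases "w \<in> ?W") (auto simp: coeff_nc_notin)
  have "eval_nc \<sigma> p = (\<Sum>w\<in>?W. sc (coeff_nc p w) * prod_list (map \<sigma> w))"
    unfolding eval_nc_by_coeff by (rule sum.mono_neutral_left) (auto simp: coeff_nc_notin)
  also have "\<dots> = (\<Sum>w\<in>?W. sc (coeff_nc p' w) * prod_list (map \<sigma> w))" using same by simp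
  also have "\<dots> = eval_nc \<sigma> p'"
    unfolding eval_nc_by_coeff by (rule sum.mono_neutral_right) (auto simp: coeff_nc_notin)
  finally show ?thesis .
qed

text \<open>The \<open>q\<close>-commutator \<open>[x, y] = xy - q\<^sup>-\<^sup>1 yx\<close> and the \<open>q\<close>-Serre element
  \<open>b\<^sup>2x - (q + q\<^sup>-\<^sup>1) bxb + xb\<^sup>2\<close>, which vanishes exactly when \<open>x, b\<close> satisfy the
  Serre relation with \<open>b\<close> in the role of \<open>E_i\<close>.\<close>

definition qcomm :: "'k::field \<Rightarrow> 'k free \<Rightarrow> 'k free \<Rightarrow> 'k free" where
  "qcomm q x y = x * y - sc (inverse q) * (y * x)"

definition serre :: "'k::field \<Rightarrow> 'k free \<Rightarrow> 'k free \<Rightarrow> 'k free" where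
  "serre q x b = b * b * x - sc (q + inverse q) * (b * x * b) + x * b * b"

definition qcomm_nc :: "'k::field \<Rightarrow> 'k ncpoly \<Rightarrow> 'k ncpoly \<Rightarrow> 'k ncpoly" where
  "qcomm_nc q x y = x \<star> y \<ominus> smul_nc (inverse q) (y \<star> x)"

definition serre_nc :: "'k::field \<Rightarrow> 'k ncpoly \<Rightarrow> 'k ncpoly \<Rightarrow> 'k ncpoly" where
  "serre_nc q x b = b \<star> b \<star> x \<ominus> smul_nc (q + inverse q) (b \<star> x \<star> b) \<oplus> x \<star> b \<star> b"

lemma eval_nc_qcomm[simp]: "eval_nc \<sigma> (qcomm_nc q x y) = qcomm q (eval_nc \<sigma> x) (eval_nc \<sigma> y)"
  by (simp add: qcomm_nc_def qcomm_def)

lemma eval_nc_serre[simp]: "eval_nc \<sigma> (serre_nc q x b) = serre q (eval_nc \<sigma> x) (eval_nc \<sigma> b)"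
  by (simp add: serre_nc_def serre_def)

lemma abs_qbr[simp]: "abs_free (qbr q x y) = qcomm q (abs_free x) (abs_free y)"
  by (simp add: qbr_def qcomm_def)

lemma comm_qcomm:
  fixes z e b :: "'k::field free"
  shows "qcomm q z e * b - b * qcomm q z e
   = (z * b - b * z) * e + z * (e * b - b * e)
     - sc (inverse q) * ((e * b - b * e) * z) - sc (inverse q) * (e * (z * b - b * z))"
proof -
  define \<sigma> where "\<sigma> = (\<lambda>i::nat. if i = 0 then z else if i = 1 then e else b)"
  let ?z = "var_nc 0 :: 'k ncpoly" and ?e = "var_nc 1" and ?b = "var_nc 2"
  have "eval_nc \<sigma> (qcomm_nc q ?z ?e \<star> ?b \<ominus> ?b \<star> qcomm_nc q ?z ?e)
      = eval_nc \<sigma> ((?z \<star> ?b \<ominus> ?b \<star> ?z) \<star> ?e \<oplus> ?z \<star> (?e \<star> ?b \<ominus> ?b \<star> ?e)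
          \<ominus> smul_nc (inverse q) ((?e \<star> ?b \<ominus> ?b \<star> ?e) \<star> ?z)
          \<ominus> smul_nc (inverse q) (?e \<star> (?z \<star> ?b \<ominus> ?b \<star> ?z)))"
    by (rule eval_nc_eqI) (simp add: qcomm_nc_def nc_defs)
  then show ?thesis by (simp add: \<sigma>_def)
qed

lemma reversed_qcomm:
  fixes z e :: "'k::field free"
  assumes "q \<noteq> 0"
  shows "e * z - sc q * (z * e) = sc (- q) * qcomm q z e"
proof -
  define \<sigma> where "\<sigma> = (\<lambda>i::nat. if i = 0 then z else e)"
  let ?z = "var_nc 0 :: 'k ncpoly" and ?e = "var_nc 1"
  have "eval_nc \<sigma> (?e \<star> ?z \<ominus> smul_nc q (?z \<star> ?e)) = eval_nc \<sigma> (smul_nc (- q) (qcomm_nc q ?z ?e))"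
    by (rule eval_nc_eqI) (simp add: qcomm_nc_def nc_defs, use assms in \<open>auto simp: field_simps\<close>)
  then show ?thesis by (simp add: \<sigma>_def)
qed

text \<open>The Serre relation \<open>b [b, a] = q [b, a] b\<close> says exactly that the Serre element vanishes.\<close>

lemma serre_as_qcomm:
  fixes a b :: "'k::field free"
  assumes "q \<noteq> 0"
  shows "b * qcomm q b a - sc q * (qcomm q b a * b) = serre q a b"
proof -
  define \<sigma> where "\<sigma> = (\<lambda>i::nat. if i = 0 then a else b)"
  let ?a = "var_nc 0 :: 'k ncpoly" and ?b = "var_nc 1"
  have "eval_nc \<sigma> (?b \<star> qcomm_nc q ?b ?a \<ominus> smul_nc q (qcomm_nc q ?b ?a \<star> ?b)) = eval_nc \<sigma> (serre_nc q ?a ?b)"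
    by (rule eval_nc_eqI)
       (simp add: qcomm_nc_def serre_nc_def nc_defs, use assms in \<open>auto simp: field_simps\<close>)
  then show ?thesis by (simp add: \<sigma>_def)
qed

lemma qcomm_twisted_comm:
  fixes a b :: "'k::field free"
  assumes "q \<noteq> 0"
  shows "b * qcomm q a b - sc (inverse q) * (qcomm q a b * b) = sc (- inverse q) * serre q a b"
proof -
  define \<sigma> where "\<sigma> = (\<lambda>i::nat. if i = 0 then a else b)"
  let ?a = "var_nc 0 :: 'k ncpoly" and ?b = "var_nc 1"
  have "eval_nc \<sigma> (?b \<star> qcomm_nc q ?a ?b \<ominus> smul_nc (inverse q) (qcomm_nc q ?a ?b \<star> ?b))
      = eval_nc \<sigma> (smul_nc (- inverse q) (serre_nc q ?a ?b))"
    by (rule eval_nc_eqI)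
       (simp add: qcomm_nc_def serre_nc_def nc_defs, use assms in \<open>auto simp: field_simps\<close>)
  then show ?thesis by (simp add: \<sigma>_def)
qed

lemma serre_qcomm:
  fixes z a b :: "'k::field free"
  assumes "q \<noteq> 0"
  defines "p \<equiv> inverse q" and "s \<equiv> q + inverse q" and "R \<equiv> z * b - b * z"
  shows "serre q (qcomm q z a) b
    = z * serre q a b - R * b * a - b * R * a + sc s * (R * a * b) - sc p * (serre q a b * z)
      + sc p * (sc s * (b * a * R)) - sc p * (a * b * R) - sc p * (a * R * b)"
proof -
  define \<sigma> where "\<sigma> = (\<lambda>i::nat. if i = 0 then z else if i = 1 then a else b)"
  let ?z = "var_nc 0 :: 'k ncpoly" and ?a = "var_nc 1" and ?b = "var_nc 2"
  let ?R = "?z \<star> ?b \<ominus> ?b \<star> ?z"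
  have "eval_nc \<sigma> (serre_nc q (qcomm_nc q ?z ?a) ?b)
      = eval_nc \<sigma> (?z \<star> serre_nc q ?a ?b \<ominus> ?R \<star> ?b \<star> ?a \<ominus> ?b \<star> ?R \<star> ?a
          \<oplus> smul_nc s (?R \<star> ?a \<star> ?b) \<ominus> smul_nc p (serre_nc q ?a ?b \<star> ?z)
          \<oplus> smul_nc p (smul_nc s (?b \<star> ?a \<star> ?R)) \<ominus> smul_nc p (?a \<star> ?b \<star> ?R)
          \<ominus> smul_nc p (?a \<star> ?R \<star> ?b))"
    by (rule eval_nc_eqI)
       (simp add: qcomm_nc_def serre_nc_def nc_defs,
        use assms(1) in \<open>auto simp: p_def s_def field_simps\<close>)
  then show ?thesis by (simp add: \<sigma>_def R_def)
qed

lemma comm_qcomm_qcomm: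
  fixes a b c :: "'k::field free"
  assumes q: "q \<noteq> 0" and s: "q + inverse q \<noteq> 0"
  defines "p \<equiv> inverse q" and "t \<equiv> inverse q * inverse q * inverse (q + inverse q)"
    and "A \<equiv> a * c - c * a"
  shows "qcomm q (qcomm q a b) c * b - b * qcomm q (qcomm q a b) c
    = sc p * (serre q a b * c) - sc p * (a * serre q c b) + sc p * (A * b * b) - sc p * (b * A * b)
      + sc t * (- (serre q a b * c) + a * serre q c b - A * b * b + b * b * A
                + serre q c b * a - c * serre q a b)"
proof -
  define \<sigma> where "\<sigma> = (\<lambda>i::nat. if i = 0 then a else if i = 1 then b else c)"
  let ?a = "var_nc 0 :: 'k ncpoly" and ?b = "var_nc 1" and ?c = "var_nc 2"
  let ?A = "?a \<star> ?c \<ominus> ?c \<star> ?a"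
  have "eval_nc \<sigma> (qcomm_nc q (qcomm_nc q ?a ?b) ?c \<star> ?b \<ominus> ?b \<star> qcomm_nc q (qcomm_nc q ?a ?b) ?c)
      = eval_nc \<sigma> (smul_nc p (serre_nc q ?a ?b \<star> ?c) \<ominus> smul_nc p (?a \<star> serre_nc q ?c ?b)
          \<oplus> smul_nc p (?A \<star> ?b \<star> ?b) \<ominus> smul_nc p (?b \<star> ?A \<star> ?b)
          \<oplus> smul_nc t (smul_nc (-1) (serre_nc q ?a ?b \<star> ?c) \<oplus> ?a \<star> serre_nc q ?c ?b
              \<ominus> ?A \<star> ?b \<star> ?b \<oplus> ?b \<star> ?b \<star> ?A \<oplus> serre_nc q ?c ?b \<star> ?a \<ominus> ?c \<star> serre_nc q ?a ?b))"
    apply (rule eval_nc_eqI)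
    apply (simp add: qcomm_nc_def serre_nc_def nc_defs)
    using q s unfolding p_def t_def
    apply (auto simp: field_simps)
    apply (metis distrib_left mult_eq_0_iff mult.right_neutral)
    done
  then show ?thesis by (simp add: \<sigma>_def A_def sc_neg1)
qed

section \<open>Congruence modulo the defining relations\<close>

text \<open>\<open>Ueq\<close> transported to the free algebra.  Since \<open>Ueq\<close> contains \<open>alg_eq\<close>, it does not depend
  on the chosen representatives (\<open>ueq_abs\<close>).\<close>

definition ueq :: "nat \<Rightarrow> 'k::field \<Rightarrow> 'k free \<Rightarrow> 'k free \<Rightarrow> bool" where
  "ueq m q X Y \<longleftrightarrow> (\<exists>x y. X = abs_free x \<and> Y = abs_free y \<and> Ueq m q x y)"

lemma ueq_abs: "ueq m q (abs_free x) (abs_free y) \<longleftrightarrow> Ueq m q x y"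
proof
  assume "ueq m q (abs_free x) (abs_free y)"
  then obtain x' y' where "abs_free x = abs_free x'" "abs_free y = abs_free y'" "Ueq m q x' y'"
    by (auto simp: ueq_def)
  then have "alg_eq x x'" "alg_eq y y'" by (auto simp: free.abs_eq_iff)
  then show "Ueq m q x y" using \<open>Ueq m q x' y'\<close> by (meson alg_eq_Ueq Ueq.sym Ueq.trans)
qed (auto simp: ueq_def)

lemma abs_rep_free: "abs_free (rep_free X) = X"
  by (rule Quotient3_abs_rep[OF Quotient3_free])

lemma ueq_refl[simp, intro]: "ueq m q X X"
  using ueq_abs[of m q "rep_free X" "rep_free X"] by (simp add: abs_rep_free Ueq.refl)

lemma ueq_sym: "ueq m q X Y \<Longrightarrow> ueq m q Y X"
  unfolding ueq_def using Ueq.sym by blast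

lemma ueq_trans[trans]: "ueq m q X Y \<Longrightarrow> ueq m q Y Z \<Longrightarrow> ueq m q X Z"
  using ueq_abs[of m q "rep_free X" "rep_free Y"] ueq_abs[of m q "rep_free Y" "rep_free Z"]
    ueq_abs[of m q "rep_free X" "rep_free Z"]
  by (simp add: abs_rep_free) (blast intro: Ueq.trans)

lemma ueq_add: "ueq m q X X' \<Longrightarrow> ueq m q Y Y' \<Longrightarrow> ueq m q (X + Y) (X' + Y')"
  unfolding ueq_def
  by (fastforce intro: Ueq.add_cong simp del: abs_Add simp add: abs_Add[symmetric])

lemma ueq_mul: "ueq m q X X' \<Longrightarrow> ueq m q Y Y' \<Longrightarrow> ueq m q (X * Y) (X' * Y')"
  unfolding ueq_def
  by (fastforce intro: Ueq.mul_cong simp del: abs_Mul simp add: abs_Mul[symmetric])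

lemma ueq_sc: "ueq m q X X' \<Longrightarrow> ueq m q (sc c * X) (sc c * X')"
  by (rule ueq_mul[OF ueq_refl])

lemma ueq_neg: "ueq m q X X' \<Longrightarrow> ueq m q (- X) (- X')"
  using ueq_sc[of m q X X' "-1"] by (simp add: sc_neg1)

lemma ueq_diff: "ueq m q X X' \<Longrightarrow> ueq m q Y Y' \<Longrightarrow> ueq m q (X - Y) (X' - Y')"
  unfolding diff_conv_add_uminus by (rule ueq_add[OF _ ueq_neg])

lemma ueq_sum_list:
  "(\<And>x. x \<in> set xs \<Longrightarrow> ueq m q (f x) (g x)) \<Longrightarrow> ueq m q (sum_list (map f xs)) (sum_list (map g xs))"
  by (induction xs) (auto intro: ueq_add)

lemma ueq_rel: "Urel m q x y \<Longrightarrow> ueq m q (abs_free x) (abs_free y)"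
  by (simp add: ueq_abs Ueq.rel)

text \<open>The two-sided ideal of elements congruent to \<open>0\<close>.  Relations are most conveniently
  propagated as ideal membership: \<open>X \<equiv> Y\<close> iff \<open>X - Y\<close> is null.\<close>

definition null :: "nat \<Rightarrow> 'k::field \<Rightarrow> 'k free \<Rightarrow> bool" where
  "null m q X \<longleftrightarrow> ueq m q X 0"

lemma null_add: "null m q X \<Longrightarrow> null m q Y \<Longrightarrow> null m q (X + Y)"
  unfolding null_def using ueq_add by fastforce
lemma null_diff: "null m q X \<Longrightarrow> null m q Y \<Longrightarrow> null m q (X - Y)"
  unfolding null_def using ueq_diff by fastforce
lemma null_neg: "null m q X \<Longrightarrow> null m q (- X)"
  unfolding null_def using ueq_neg by fastforce
lemma null_mult_left: "null m q X \<Longrightarrow> null m q (L * X)"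
  unfolding null_def using ueq_mul[OF ueq_refl, of m q X 0 L] by simp
lemma null_mult_right: "null m q X \<Longrightarrow> null m q (X * R)"
  unfolding null_def using ueq_mul[OF _ ueq_refl, of m q X 0 R] by simp

lemmas null_ideal = null_add null_diff null_mult_left null_mult_right

lemma null_iff_ueq: "null m q (X - Y) \<longleftrightarrow> ueq m q X Y"
proof
  assume "null m q (X - Y)"
  then have "ueq m q (X - Y + Y) (0 + Y)" unfolding null_def by (rule ueq_add) simp
  then show "ueq m q X Y" by simp
next
  assume "ueq m q X Y"
  then show "null m q (X - Y)" using ueq_diff[OF _ ueq_refl, of m q X Y Y] by (simp add: null_def)
qed

lemma sum_alpha:
  assumes "1 \<le> i" "i \<le> m"
  shows "(\<Sum>k=1..m+1. alpha i k * y k) = y i - y (i + 1)"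
proof -
  have "(\<Sum>k=1..m+1. alpha i k * y k)
      = (\<Sum>k=1..m+1. (if k = i then y k else 0) - (if k = i + 1 then y k else 0))"
    by (rule sum.cong) (auto simp: alpha_def)
  also have "\<dots> = y i - y (i + 1)" using assms by (simp add: sum_subtractf)
  finally show ?thesis .
qed

lemma ipr_alpha_left: "1 \<le> i \<Longrightarrow> i \<le> m \<Longrightarrow> ipr m (alpha i) y = y i - y (i + 1)"
  unfolding ipr_def by (rule sum_alpha)

lemma ipr_alpha_alpha:
  "1 \<le> i \<Longrightarrow> i \<le> m \<Longrightarrow> ipr m (alpha i) (alpha j)
     = (if i = j then 2 else if j = i + 1 \<or> i = j + 1 then -1 else 0)"
  using ipr_alpha_left[of i m "alpha j"] by (auto simp: alpha_def)

lemma ipr_wneg_left: "ipr m (wneg x) y = - ipr m x y"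
  by (simp add: ipr_def wneg_def sum_negf)

lemma ipr_wplus_right: "ipr m mu (wplus a b) = ipr m mu a + ipr m mu b"
  by (simp add: ipr_def wplus_def distrib_left sum.distrib)

lemma alpha_valid: "1 \<le> i \<Longrightarrow> i \<le> m \<Longrightarrow> in_root_lattice m (alpha i)"
  using sum_alpha[of i m "\<lambda>_. 1"] by (auto simp: in_root_lattice_def alpha_def)

lemma wneg_valid: "in_root_lattice m mu \<Longrightarrow> in_root_lattice m (wneg mu)"
  by (auto simp: in_root_lattice_def wneg_def sum_negf)

lemma wneg_wneg[simp]: "wneg (wneg mu) = mu"
  by (simp add: wneg_def)

lemma wplus_wneg: "wplus mu (wneg mu) = (\<lambda>_. 0)"
  by (simp add: wplus_def wneg_def)

lemma wplus_comm: "wplus a b = wplus b a"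
  by (auto simp: wplus_def)

abbreviation eQ :: "nat \<Rightarrow> 'k::field free" where "eQ i \<equiv> abs_free (Gen (E i))"
abbreviation kQ :: "(nat \<Rightarrow> int) \<Rightarrow> 'k::field free" where "kQ mu \<equiv> abs_free (Gen (K mu))"

lemma K_inverse_right: "in_root_lattice m mu \<Longrightarrow> ueq m q (kQ mu * kQ (wneg mu)) 1"
  using ueq_rel[OF Urel.KK, of m mu "wneg mu" q] ueq_rel[OF Urel.K0, of m q] wneg_valid[of m mu]
  by (simp add: wplus_wneg) (rule ueq_trans)

lemma K_inverse_left: "in_root_lattice m mu \<Longrightarrow> ueq m q (kQ (wneg mu) * kQ mu) 1"
  using K_inverse_right[of m "wneg mu" q] wneg_valid[of m mu] by simp

lemma KE_rel: "in_root_lattice m mu \<Longrightarrow> 1 \<le> i \<Longrightarrow> i \<le> m \<Longrightarrow>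
   ueq m q (kQ mu * eQ i) (sc (q powi ipr m mu (alpha i)) * (eQ i * kQ mu))"
  using ueq_rel[OF Urel.KE, of m mu i q] by simp

lemma E_comm_distant:
  "1 \<le> i \<Longrightarrow> i \<le> m \<Longrightarrow> 1 \<le> j \<Longrightarrow> j \<le> m \<Longrightarrow> i + 1 < j \<or> j + 1 < i \<Longrightarrow>
   null m q (eQ i * eQ j - eQ j * eQ i)"
  using ueq_rel[OF Urel.EEcomm, of i m j q] by (auto simp: ipr_alpha_alpha null_iff_ueq)

lemma E_serre:
  "q \<noteq> 0 \<Longrightarrow> 1 \<le> i \<Longrightarrow> i \<le> m \<Longrightarrow> 1 \<le> k \<Longrightarrow> k \<le> m \<Longrightarrow> k = i + 1 \<or> i = k + 1 \<Longrightarrow>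
   null m q (serre q (eQ k) (eQ i))"
  using ueq_rel[OF Urel.EEserre, of i m k q] serre_as_qcomm[of q "eQ i" "eQ k"]
  by (auto simp: ipr_alpha_alpha null_iff_ueq[symmetric])

section \<open>The adjoint action on the free algebra\<close>

definition ad_term :: "nat \<Rightarrow> 'k::field free \<Rightarrow> 'k \<times> 'k fexpr \<times> 'k fexpr \<Rightarrow> 'k free" where
  "ad_term m U t = (case t of (c, h1, h2) \<Rightarrow> sc c * (abs_free h1 * U * abs_free (antipode m h2)))"

definition adQ :: "nat \<Rightarrow> 'k::field fexpr \<Rightarrow> 'k free \<Rightarrow> 'k free" where
  "adQ m h U = sum_list (map (ad_term m U) (Delta m h))"

lemma abs_ad: "abs_free (ad m h u) = adQ m h (abs_free u)"
  unfolding ad_def adQ_def abs_esum map_map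
  by (rule arg_cong[where f = sum_list], rule map_cong) (auto simp: ad_term_def)

lemma abs_lamA: "abs_free (lamA m h v) = adQ m (piA h) (abs_free v)"
  by (simp add: lamA_def abs_ad)

lemma adQ_add: "adQ m h (U + V) = adQ m h U + adQ m h V"
proof -
  have "ad_term m (U + V) = (\<lambda>t. ad_term m U t + ad_term m V t)"
    by (rule ext) (simp add: ad_term_def case_prod_unfold algebra_simps)
  then show ?thesis by (simp add: adQ_def sum_list_addf)
qed

lemma adQ_sc: "adQ m h (sc d * U) = sc d * adQ m h U"
proof -
  have "ad_term m (sc d * U) = (\<lambda>t. sc d * ad_term m U t)"
  proof
    fix t :: "'a \<times> 'a fexpr \<times> 'a fexpr"
    obtain c h1 h2 where t: "t = (c, h1, h2)" by (cases t) auto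
    have "abs_free h1 * (sc d * U) * abs_free (antipode m h2)
        = sc d * (abs_free h1 * U * abs_free (antipode m h2))"
      by (simp only: mult.assoc sc_left_comm[of "abs_free h1" d])
    then show "ad_term m (sc d * U) t = sc d * ad_term m U t"
      by (simp add: ad_term_def t sc_sc_comm)
  qed
  then show ?thesis by (simp add: adQ_def sum_list_const_mult)
qed

lemma adQ_zero: "adQ m h 0 = 0"
  using adQ_sc[of m h 0 0] by simp

lemma adQ_sum: "adQ m h (sum_list (map f xs)) = sum_list (map (\<lambda>x. adQ m h (f x)) xs)"
  by (induction xs) (simp_all add: adQ_add adQ_zero)

lemma adQ_cong: "ueq m q U V \<Longrightarrow> ueq m q (adQ m' h U) (adQ m' h V)"
  unfolding adQ_def
  by (rule ueq_sum_list) (auto simp: ad_term_def split: prod.split intro!: ueq_sc ueq_mul)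

text \<open>\<open>ad\<close> is an algebra map in \<open>h\<close>: this is multiplicativity of the coproduct and
  anti-multiplicativity of the antipode.  The formal coproduct of a product is a concatenation,
  whose sum splits as a double sum.\<close>

lemma sum_list_concat_map:
  "sum_list (map f (concat xss)) = sum_list (map (\<lambda>xs. sum_list (map f xs)) xss)"
  by (induction xss) simp_all

lemma adQ_Mul: "adQ m (Mul a b) U = adQ m a (adQ m b U)"
proof -
  have inner: "sum_list (map (\<lambda>(d, y1, y2). ad_term m U (c * d, Mul x1 y1, Mul x2 y2)) (Delta m b))
      = sc c * (abs_free x1 * adQ m b U * abs_free (antipode m x2))" for c x1 x2
  proof -
    have "sum_list (map (\<lambda>(d, y1, y2). ad_term m U (c * d, Mul x1 y1, Mul x2 y2)) (Delta m b))
        = sum_list (map (\<lambda>y. sc c * (abs_free x1 * ad_term m U y * abs_free (antipode m x2))) (Delta m b))"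
      by (rule arg_cong[where f = sum_list], rule map_cong[OF HOL.refl])
         (auto simp: ad_term_def sc_mult mult.assoc sc_left_comm[of "abs_free x1"])
    then show ?thesis unfolding adQ_def by (simp add: sum_list_const_mult sum_list_mult_const)
  qed
  have "adQ m (Mul a b) U
      = sum_list (map (\<lambda>(c, x1, x2). sum_list (map (\<lambda>(d, y1, y2).
          ad_term m U (c * d, Mul x1 y1, Mul x2 y2)) (Delta m b))) (Delta m a))"
    unfolding adQ_def by (simp add: sum_list_concat_map map_map o_def case_prod_unfold)
  also have "\<dots> = adQ m a (adQ m b U)"
    unfolding inner unfolding adQ_def
    by (rule arg_cong[where f = sum_list], rule map_cong) (auto simp: ad_term_def)
  finally show ?thesis .
qed

lemma adQ_Add: "adQ m (Add a b) U = adQ m a U + adQ m b U"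
  by (simp add: adQ_def)

lemma adQ_Scal: "adQ m (Scal c) U = sc c * U"
  by (simp add: adQ_def ad_term_def one_def)

lemma adQ_E: "1 \<le> i \<Longrightarrow> i \<le> m \<Longrightarrow>
   adQ m (Gen (E i)) U = eQ i * U - kQ (wneg (alpha i)) * U * kQ (alpha i) * eQ i"
  by (simp add: adQ_def ad_term_def Delta_gen_def valid_gen_def antipode_gen_def one_def
      sc_neg1 mult.assoc)

lemma adQ_K: "in_root_lattice m mu \<Longrightarrow> adQ m (Gen (K mu)) U = kQ mu * U * kQ (wneg mu)"
  by (simp add: adQ_def ad_term_def Delta_gen_def valid_gen_def antipode_gen_def)

text \<open>Twisted Leibniz rules, reflecting \<open>\<Delta>(K_mu) = K_mu \<otimes> K_mu\<close> and
  \<open>\<Delta>(E_i) = K_(-alpha_i) \<otimes> E_i + E_i \<otimes> 1\<close>.\<close>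

lemma adQ_K_mul:
  assumes mu: "in_root_lattice m mu"
  shows "ueq m q (adQ m (Gen (K mu)) (V * W)) (adQ m (Gen (K mu)) V * adQ m (Gen (K mu)) W)"
proof -
  have "adQ m (Gen (K mu)) V * adQ m (Gen (K mu)) W
      = kQ mu * V * (kQ (wneg mu) * kQ mu) * W * kQ (wneg mu)"
    using mu by (simp add: adQ_K mult.assoc)
  also have "ueq m q \<dots> (kQ mu * V * 1 * W * kQ (wneg mu))"
    by (intro ueq_mul ueq_refl K_inverse_left mu)
  finally show ?thesis using mu by (simp add: adQ_K mult.assoc ueq_sym)
qed

lemma adQ_E_mul:
  fixes V W :: "'k::field free"
  assumes i: "1 \<le> i" "i \<le> m"
  shows "ueq m q (adQ m (Gen (E i)) (V * W))
     (adQ m (Gen (K (wneg (alpha i)))) V * adQ m (Gen (E i)) W + adQ m (Gen (E i)) V * W)"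
proof -
  let ?k = "kQ (alpha i) :: 'k free" and ?k' = "kQ (wneg (alpha i))" and ?e = "eQ i"
  have v: "in_root_lattice m (alpha i)" using i by (rule alpha_valid)
  have "adQ m (Gen (K (wneg (alpha i)))) V * adQ m (Gen (E i)) W + adQ m (Gen (E i)) V * W
      = ?e * V * W - ?k' * V * (?k * ?k') * W * ?k * ?e"
    using i v by (simp add: adQ_K adQ_E wneg_valid algebra_simps)
  also have "ueq m q \<dots> (?e * V * W - ?k' * V * 1 * W * ?k * ?e)"
    by (intro ueq_diff ueq_mul ueq_refl K_inverse_right v)
  finally show ?thesis using i by (simp add: adQ_E mult.assoc ueq_sym)
qed

lemma adQ_K_one: "in_root_lattice m mu \<Longrightarrow> ueq m q (adQ m (Gen (K mu)) 1) 1"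
  by (simp add: adQ_K K_inverse_right)

lemma adQ_E_one:
  assumes "1 \<le> i" "i \<le> m"
  shows "ueq m q (adQ m (Gen (E i)) 1) 0"
proof -
  have "adQ m (Gen (E i)) 1 = eQ i - kQ (wneg (alpha i)) * kQ (alpha i) * eQ i"
    using assms by (simp add: adQ_E)
  also have "ueq m q \<dots> (eQ i - 1 * eQ i)"
    using assms by (intro ueq_diff ueq_mul ueq_refl K_inverse_left alpha_valid)
  finally show ?thesis by simp
qed

section \<open>The generators \<open>z_j\<close> of \<open>U_q^(c_m)\<close>\<close>

text \<open>The Lusztig automorphisms act factorwise on expressions, and \<open>T_k\<close> fixes \<open>E_J\<close> for
  \<open>k + 1 < J\<close>; therefore \<open>z_(j+1) = T_1 \<cdots> T_j E_(j+1) = [z_j, E_(j+1)]\<close>.\<close>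

lemma foldr_Tl_Mul[simp]:
  "foldr (Tl m q) ks (Mul x y) = Mul (foldr (Tl m q) ks x) (foldr (Tl m q) ks y)"
  by (induction ks) auto

lemma foldr_Tl_Add[simp]:
  "foldr (Tl m q) ks (Add x y) = Add (foldr (Tl m q) ks x) (foldr (Tl m q) ks y)"
  by (induction ks) auto

lemma foldr_Tl_Scal[simp]: "foldr (Tl m q) ks (Scal c) = Scal c"
  by (induction ks) auto

lemma foldr_Tl_qbr: "foldr (Tl m q) ks (qbr q x y) = qbr q (foldr (Tl m q) ks x) (foldr (Tl m q) ks y)"
  by (simp add: qbr_def sub_def smult_def)

lemma foldr_Tl_E_fixed:
  assumes "J \<le> m" "\<forall>k\<in>set ks. 1 \<le> k \<and> k + 1 < J"
  shows "foldr (Tl m q) ks (Gen (E J)) = Gen (E J)"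
  using assms(2)
proof (induction ks)
  case (Cons k ks)
  then have "1 \<le> k" "k + 1 < J" by auto
  then have "Tl m q k (Gen (E J)) = Gen (E J)"
    using assms(1) by (simp add: T_gen_def ipr_alpha_alpha)
  then show ?case using Cons by simp
qed simp

lemma zgen_Suc:
  assumes "1 \<le> j" "j + 1 \<le> m"
  shows "zgen m q (Suc j) = qbr q (zgen m q j) (Gen (E (Suc j)))"
proof -
  have T: "Tl m q j (Gen (E (Suc j))) = qbr q (Gen (E j)) (Gen (E (Suc j)))"
    using assms by (simp add: T_gen_def ipr_alpha_alpha qbr_def)
  have "[1..<Suc j] = [1..<j] @ [j]" using assms by simp
  then have "zgen m q (Suc j) = foldr (Tl m q) [1..<j] (Tl m q j (Gen (E (Suc j))))"
    by (simp add: zgen_def)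
  also have "\<dots> = qbr q (zgen m q j) (foldr (Tl m q) [1..<j] (Gen (E (Suc j))))"
    by (simp only: T foldr_Tl_qbr zgen_def)
  also have "foldr (Tl m q) [1..<j] (Gen (E (Suc j))) = Gen (E (Suc j))"
    using assms by (intro foldr_Tl_E_fixed) auto
  finally show ?thesis .
qed

abbreviation zQ :: "nat \<Rightarrow> 'k::field \<Rightarrow> nat \<Rightarrow> 'k free" where
  "zQ m q j \<equiv> abs_free (zgen m q j)"

lemma zQ_1: "zQ m q (Suc 0) = eQ (Suc 0)"
  by (simp add: zgen_def)

lemma zQ_Suc: "1 \<le> j \<Longrightarrow> j + 1 \<le> m \<Longrightarrow> zQ m q (Suc j) = qcomm q (zQ m q j) (eQ (Suc j))"
  by (simp add: zgen_Suc)

definition has_weight :: "nat \<Rightarrow> 'k::field \<Rightarrow> 'k free \<Rightarrow> (nat \<Rightarrow> int) \<Rightarrow> bool" where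
  "has_weight m q X \<beta> \<longleftrightarrow> (\<forall>mu. in_root_lattice m mu \<longrightarrow>
     ueq m q (kQ mu * X) (sc (q powi ipr m mu \<beta>) * (X * kQ mu)))"

lemma has_weight_E: "1 \<le> i \<Longrightarrow> i \<le> m \<Longrightarrow> has_weight m q (eQ i) (alpha i)"
  by (simp add: has_weight_def KE_rel)

lemma has_weight_mul:
  assumes q: "q \<noteq> 0" and X: "has_weight m q X a" and Y: "has_weight m q Y b"
  shows "has_weight m q (X * Y) (wplus a b)"
  unfolding has_weight_def
proof (intro allI impI)
  fix mu assume mu: "in_root_lattice m mu"
  let ?s = "q powi ipr m mu a" and ?t = "q powi ipr m mu b" and ?k = "kQ mu"
  have "ueq m q (?k * X * Y) (sc ?s * (X * ?k) * Y)"
    by (rule ueq_mul[OF _ ueq_refl]) (use X mu in \<open>simp add: has_weight_def\<close>)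
  then have "ueq m q (?k * (X * Y)) (sc ?s * (X * (?k * Y)))" by (simp add: mult.assoc)
  also have "ueq m q \<dots> (sc ?s * (X * (sc ?t * (Y * ?k))))"
    using Y mu unfolding has_weight_def by (auto intro: ueq_mul)
  also have "sc ?s * (X * (sc ?t * (Y * ?k))) = sc (q powi ipr m mu (wplus a b)) * (X * Y * ?k)"
    using q by (simp add: ipr_wplus_right power_int_add sc_mult mult.assoc sc_left_comm[of X])
  finally show "ueq m q (?k * (X * Y)) (sc (q powi ipr m mu (wplus a b)) * (X * Y * ?k))" .
qed

lemma has_weight_sc: "has_weight m q X a \<Longrightarrow> has_weight m q (sc c * X) a"
  unfolding has_weight_def
proof (intro allI impI)
  fix mu assume X: "\<forall>mu. in_root_lattice m mu \<longrightarrow>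
      ueq m q (kQ mu * X) (sc (q powi ipr m mu a) * (X * kQ mu))"
    and mu: "in_root_lattice m mu"
  have "kQ mu * (sc c * X) = sc c * (kQ mu * X)" by (rule sc_left_comm)
  also have "ueq m q \<dots> (sc c * (sc (q powi ipr m mu a) * (X * kQ mu)))"
    using X mu by (auto intro: ueq_sc)
  also have "\<dots> = sc (q powi ipr m mu a) * (sc c * X * kQ mu)"
    by (simp add: sc_sc_comm mult.assoc)
  finally show "ueq m q (kQ mu * (sc c * X)) (sc (q powi ipr m mu a) * (sc c * X * kQ mu))" .
qed

lemma has_weight_diff: "has_weight m q X a \<Longrightarrow> has_weight m q Y a \<Longrightarrow> has_weight m q (X - Y) a"
  unfolding has_weight_def
proof (intro allI impI)
  fix mu assume mu: "in_root_lattice m mu"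
    and X: "\<forall>mu. in_root_lattice m mu \<longrightarrow> ueq m q (kQ mu * X) (sc (q powi ipr m mu a) * (X * kQ mu))"
    and Y: "\<forall>mu. in_root_lattice m mu \<longrightarrow> ueq m q (kQ mu * Y) (sc (q powi ipr m mu a) * (Y * kQ mu))"
  have "kQ mu * (X - Y) = kQ mu * X - kQ mu * Y" by (simp add: right_diff_distrib)
  also have "ueq m q \<dots> (sc (q powi ipr m mu a) * (X * kQ mu) - sc (q powi ipr m mu a) * (Y * kQ mu))"
    using X Y mu by (auto intro: ueq_diff)
  also have "\<dots> = sc (q powi ipr m mu a) * ((X - Y) * kQ mu)"
    by (simp add: right_diff_distrib left_diff_distrib)
  finally show "ueq m q (kQ mu * (X - Y)) (sc (q powi ipr m mu a) * ((X - Y) * kQ mu))" .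
qed

lemma has_weight_qcomm:
  "q \<noteq> 0 \<Longrightarrow> has_weight m q X a \<Longrightarrow> has_weight m q Y b \<Longrightarrow> has_weight m q (qcomm q X Y) (wplus a b)"
  unfolding qcomm_def by (metis has_weight_diff has_weight_mul has_weight_sc wplus_comm)

text \<open>\<open>z_j\<close> has weight \<open>alpha_1 + \<dots> + alpha_j = e_1 - e_(j+1)\<close>.\<close>

definition zweight :: "nat \<Rightarrow> nat \<Rightarrow> int" where
  "zweight j = (\<lambda>k. if k = 1 then 1 else if k = j + 1 then -1 else 0)"

lemma has_weight_z:
  assumes q: "q \<noteq> 0"
  shows "1 \<le> j \<Longrightarrow> j \<le> m \<Longrightarrow> has_weight m q (zQ m q j) (zweight j)"
proof (induction j rule: nat_induct_at_least)
  case base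
  have "zweight 1 = alpha 1" by (auto simp: zweight_def alpha_def)
  then show ?case using base has_weight_E[of 1 m q] by (simp add: zQ_1)
next
  case (Suc j)
  have "wplus (zweight j) (alpha (Suc j)) = zweight (Suc j)"
    using Suc by (auto simp: zweight_def alpha_def wplus_def)
  moreover have "has_weight m q (qcomm q (zQ m q j) (eQ (Suc j))) (wplus (zweight j) (alpha (Suc j)))"
    using Suc q by (intro has_weight_qcomm has_weight_E) auto
  ultimately show ?case using Suc by (simp add: zQ_Suc)
qed

lemma conj_K_weight:
  assumes X: "has_weight m q X \<beta>" and mu: "in_root_lattice m mu"
  shows "ueq m q (kQ mu * X * kQ (wneg mu)) (sc (q powi ipr m mu \<beta>) * X)"
proof -
  have "ueq m q (kQ mu * X * kQ (wneg mu)) (sc (q powi ipr m mu \<beta>) * (X * kQ mu) * kQ (wneg mu))"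
    using X mu unfolding has_weight_def by (auto intro: ueq_mul)
  also have "\<dots> = sc (q powi ipr m mu \<beta>) * (X * (kQ mu * kQ (wneg mu)))"
    by (simp add: mult.assoc)
  also have "ueq m q \<dots> (sc (q powi ipr m mu \<beta>) * (X * 1))"
    by (intro ueq_sc ueq_mul[OF ueq_refl] K_inverse_right mu)
  finally show ?thesis by simp
qed

text \<open>Propagating commutation and Serre relations through \<open>q\<close>-commutators: each is an
  instance of a polynomial identity whose right-hand side lies in the ideal.\<close>

lemma comm_qcomm_null:
  assumes "null m q (z * b - b * z)" "null m q (e * b - b * e)"
  shows "null m q (qcomm q z e * b - b * qcomm q z e)"
  unfolding comm_qcomm using assms by (blast intro: null_ideal)

lemma serre_qcomm_null:
  assumes q: "q \<noteq> 0" and "null m q (z * b - b * z)" "null m q (serre q a b)"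
  shows "null m q (serre q (qcomm q z a) b)"
  unfolding serre_qcomm[OF q] using assms(2,3) by (blast intro: null_ideal)

lemma comm_qcomm_qcomm_null:
  assumes q: "q \<noteq> 0" and s: "q + inverse q \<noteq> 0"
    and "null m q (serre q a b)" "null m q (serre q c b)" "null m q (a * c - c * a)"
  shows "null m q (qcomm q (qcomm q a b) c * b - b * qcomm q (qcomm q a b) c)"
  unfolding comm_qcomm_qcomm[OF q s] using assms(3-5)
  by (intro null_add null_diff; (intro null_mult_left null_mult_right null_neg)?;
      blast intro: null_ideal null_neg)

lemma z_comm_E_low:
  assumes im: "i \<le> m"
  shows "1 \<le> j \<Longrightarrow> j + 1 < i \<Longrightarrow> null m q (zQ m q j * eQ i - eQ i * zQ m q j)"
proof (induction j rule: nat_induct_at_least)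
  case base
  then show ?case using E_comm_distant[of 1 m i q] im by (simp add: zQ_1)
next
  case (Suc j)
  have "null m q (zQ m q j * eQ i - eQ i * zQ m q j)" using Suc by simp
  moreover have "null m q (eQ (Suc j) * eQ i - eQ i * eQ (Suc j))"
    using Suc im by (intro E_comm_distant) auto
  ultimately show ?case using Suc im by (simp add: zQ_Suc comm_qcomm_null)
qed

lemma z_serre:
  assumes q: "q \<noteq> 0" and j: "1 \<le> j" "j + 1 \<le> m"
  shows "null m q (serre q (zQ m q j) (eQ (Suc j)))"
proof (cases "j = 1")
  case True
  then show ?thesis using E_serre[OF q, of 2 m 1] j by (simp add: zQ_1 numeral_2_eq_2)
next
  case False
  then obtain j' where j': "j = Suc j'" "1 \<le> j'" using j by (cases j) auto
  have "null m q (zQ m q j' * eQ (Suc j) - eQ (Suc j) * zQ m q j')"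
    using z_comm_E_low[of "Suc j" m j' q] j j' by simp
  moreover have "null m q (serre q (eQ j) (eQ (Suc j)))"
    using E_serre[OF q, of "Suc j" m j] j by simp
  ultimately show ?thesis using j j' by (simp add: zQ_Suc serre_qcomm_null[OF q])
qed

text \<open>The base case \<open>j = i + 1\<close>
  is the substantial one: \<open>z_(i+1) = [[z_(i-1), E_i], E_(i+1)]\<close> and both Serre relations
  at \<open>E_i\<close> enter.\<close>

lemma z_comm_E_high:
  assumes q: "q \<noteq> 0" and s: "q + inverse q \<noteq> 0" and i: "2 \<le> i"
  shows "i + 1 \<le> j \<Longrightarrow> j \<le> m \<Longrightarrow> null m q (zQ m q j * eQ i - eQ i * zQ m q j)"
proof (induction j rule: nat_induct_at_least)
  case base
  obtain i' where i': "i = Suc i'" "1 \<le> i'" using i by (cases i) auto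
  have z: "zQ m q (i + 1) = qcomm q (qcomm q (zQ m q i') (eQ i)) (eQ (Suc i))"
    using base i' by (simp add: zQ_Suc)
  have "null m q (serre q (zQ m q i') (eQ i))" using z_serre[OF q, of i' m] i' base by simp
  moreover have "null m q (serre q (eQ (Suc i)) (eQ i))" using E_serre[OF q, of i m "Suc i"] base i by simp
  moreover have "null m q (zQ m q i' * eQ (Suc i) - eQ (Suc i) * zQ m q i')"
    using z_comm_E_low[of "Suc i" m i' q] base i' by simp
  ultimately show ?case unfolding z by (rule comm_qcomm_qcomm_null[OF q s])
next
  case (Suc j)
  have "null m q (zQ m q j * eQ i - eQ i * zQ m q j)" using Suc by simp
  moreover have "null m q (eQ (Suc j) * eQ i - eQ i * eQ (Suc j))"
    using Suc i by (intro E_comm_distant) auto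
  ultimately show ?case using Suc i by (simp add: zQ_Suc comm_qcomm_null)
qed

section \<open>Stability of \<open>U_q^(c_m)\<close> under the action of \<open>\<pi>_A(U_A^(\<ge>0))\<close>\<close>

definition UcmQ :: "nat \<Rightarrow> 'k::field \<Rightarrow> 'k free set" where
  "UcmQ m q = {X. \<exists>v\<in>Ucm m q. ueq m q X (abs_free v)}"

lemma UcmQ_ueq: "ueq m q X Y \<Longrightarrow> Y \<in> UcmQ m q \<Longrightarrow> X \<in> UcmQ m q"
  unfolding UcmQ_def using ueq_trans by blast

lemma UcmQ_abs: "v \<in> Ucm m q \<Longrightarrow> abs_free v \<in> UcmQ m q"
  unfolding UcmQ_def by blast

lemma UcmQ_add:
  assumes "X \<in> UcmQ m q" "Y \<in> UcmQ m q"
  shows "X + Y \<in> UcmQ m q"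
proof -
  obtain v w where "v \<in> Ucm m q" "w \<in> Ucm m q" "ueq m q X (abs_free v)" "ueq m q Y (abs_free w)"
    using assms unfolding UcmQ_def by blast
  then have "Add v w \<in> Ucm m q" "ueq m q (X + Y) (abs_free (Add v w))"
    by (auto simp: Ucm_def intro: subalg.add ueq_add)
  then show ?thesis unfolding UcmQ_def by blast
qed

lemma UcmQ_mul:
  assumes "X \<in> UcmQ m q" "Y \<in> UcmQ m q"
  shows "X * Y \<in> UcmQ m q"
proof -
  obtain v w where "v \<in> Ucm m q" "w \<in> Ucm m q" "ueq m q X (abs_free v)" "ueq m q Y (abs_free w)"
    using assms unfolding UcmQ_def by blast
  then have "Mul v w \<in> Ucm m q" "ueq m q (X * Y) (abs_free (Mul v w))"
    by (auto simp: Ucm_def intro: subalg.mul ueq_mul)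
  then show ?thesis unfolding UcmQ_def by blast
qed

lemma UcmQ_scal: "sc c \<in> UcmQ m q"
  using UcmQ_abs[of "Scal c" m q] by (simp add: Ucm_def subalg.scal)

lemma UcmQ_sc: "X \<in> UcmQ m q \<Longrightarrow> sc c * X \<in> UcmQ m q"
  by (rule UcmQ_mul[OF UcmQ_scal])

lemma UcmQ_null: "null m q X \<Longrightarrow> X \<in> UcmQ m q"
  unfolding null_def using UcmQ_ueq UcmQ_scal[of 0 m q] by simp

lemma UcmQ_z: "1 \<le> j \<Longrightarrow> j \<le> m \<Longrightarrow> zQ m q j \<in> UcmQ m q"
  by (rule UcmQ_abs) (auto simp: Ucm_def intro: subalg.gen)

lemma Ucm_induct_UcmQ:
  assumes v: "v \<in> Ucm m q"
    and f_scal: "\<And>c. f (sc c) \<in> UcmQ m q"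
    and f_gen: "\<And>j. 1 \<le> j \<Longrightarrow> j \<le> m \<Longrightarrow> f (zQ m q j) \<in> UcmQ m q"
    and f_add: "\<And>V W. f V \<in> UcmQ m q \<Longrightarrow> f W \<in> UcmQ m q \<Longrightarrow> f (V + W) \<in> UcmQ m q"
    and f_mul: "\<And>V W. f V \<in> UcmQ m q \<Longrightarrow> f W \<in> UcmQ m q \<Longrightarrow> V \<in> UcmQ m q \<Longrightarrow> W \<in> UcmQ m q
               \<Longrightarrow> f (V * W) \<in> UcmQ m q"
  shows "f (abs_free v) \<in> UcmQ m q"
  using v unfolding Ucm_def
proof (induction v rule: subalg.induct)
  case (scal c) then show ?case using f_scal by simp
next
  case (gen x) then show ?case using f_gen by auto
next
  case (add x y) then show ?case using f_add by simp
next
  case (mul x y) then show ?case using f_mul UcmQ_abs[of x m q] UcmQ_abs[of y m q] by (simp add: Ucm_def)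
qed

lemma adQ_stable_UcmQ:
  assumes "\<And>v. v \<in> Ucm m q \<Longrightarrow> adQ m h (abs_free v) \<in> UcmQ m q" and "V \<in> UcmQ m q"
  shows "adQ m h V \<in> UcmQ m q"
  using assms adQ_cong UcmQ_ueq unfolding UcmQ_def by blast

text \<open>\<open>ad(K_mu)\<close> preserves \<open>U_q^(c_m)\<close>: it is an algebra automorphism scaling each \<open>z_j\<close>.\<close>

lemma adQ_K_UcmQ:
  fixes q :: "'k::field"
  assumes q: "q \<noteq> 0" and mu: "in_root_lattice m mu" and V: "V \<in> UcmQ m q"
  shows "adQ m (Gen (K mu)) V \<in> UcmQ m q"
proof (rule adQ_stable_UcmQ[OF _ V])
  fix v assume v: "v \<in> Ucm m q"
  show "adQ m (Gen (K mu)) (abs_free v) \<in> UcmQ m q"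
  proof (rule Ucm_induct_UcmQ[OF v])
    fix c
    have "adQ m (Gen (K mu)) (sc c * 1 :: 'k free) = sc c * adQ m (Gen (K mu)) 1" by (rule adQ_sc)
    also have "ueq m q \<dots> (sc c * 1)" by (intro ueq_sc adQ_K_one mu)
    finally show "adQ m (Gen (K mu)) (sc c) \<in> UcmQ m q" using UcmQ_scal by (auto intro: UcmQ_ueq)
  next
    fix j assume j: "1 \<le> j" "j \<le> m"
    have "ueq m q (adQ m (Gen (K mu)) (zQ m q j)) (sc (q powi ipr m mu (zweight j)) * zQ m q j)"
      using conj_K_weight[OF has_weight_z[OF q j] mu] mu by (simp add: adQ_K)
    then show "adQ m (Gen (K mu)) (zQ m q j) \<in> UcmQ m q"
      using UcmQ_sc[OF UcmQ_z[OF j]] by (blast intro: UcmQ_ueq)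
  next
    fix V W
    show "adQ m (Gen (K mu)) V \<in> UcmQ m q \<Longrightarrow> adQ m (Gen (K mu)) W \<in> UcmQ m q
        \<Longrightarrow> adQ m (Gen (K mu)) (V + W) \<in> UcmQ m q"
      by (simp add: adQ_add UcmQ_add)
    show "adQ m (Gen (K mu)) V \<in> UcmQ m q \<Longrightarrow> adQ m (Gen (K mu)) W \<in> UcmQ m q
        \<Longrightarrow> adQ m (Gen (K mu)) (V * W) \<in> UcmQ m q"
      using adQ_K_mul[OF mu] UcmQ_mul UcmQ_ueq by blast
  qed
qed

lemma adQ_E_weight:
  assumes "1 \<le> i" "i \<le> m" "has_weight m q X \<beta>"
  shows "ueq m q (adQ m (Gen (E i)) X) (eQ i * X - sc (q powi ipr m (wneg (alpha i)) \<beta>) * (X * eQ i))"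
proof -
  have v: "in_root_lattice m (wneg (alpha i))" using assms by (simp add: alpha_valid wneg_valid)
  have "ueq m q (kQ (wneg (alpha i)) * X * kQ (alpha i) * eQ i)
      (sc (q powi ipr m (wneg (alpha i)) \<beta>) * X * eQ i)"
    using conj_K_weight[OF assms(3) v] by (auto intro: ueq_mul)
  then show ?thesis using assms by (simp add: adQ_E mult.assoc) (auto intro: ueq_diff)
qed

lemma ipr_wneg_alpha_zweight: "2 \<le> i \<Longrightarrow> i \<le> m \<Longrightarrow>
  ipr m (wneg (alpha i)) (zweight j) = (if i = j + 1 then 1 else 0) - (if i = j then 1 else 0)"
  by (simp add: ipr_wneg_left ipr_alpha_left zweight_def)

text \<open>The key computation: for \<open>i \<ge> 2\<close>, \<open>ad(E_i)(z_j)\<close> is null unless \<open>i = j + 1\<close>, in which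
  case it is \<open>-q z_i\<close>.\<close>

lemma adQ_E_z:
  assumes q: "q \<noteq> 0" and s: "q + inverse q \<noteq> 0"
    and i: "2 \<le> i" "i \<le> m" and j: "1 \<le> j" "j \<le> m"
  shows "adQ m (Gen (E i)) (zQ m q j) \<in> UcmQ m q"
proof -
  let ?z = "zQ m q j" and ?e = "eQ i"
  have ad: "ueq m q (adQ m (Gen (E i)) ?z)
     (?e * ?z - sc (q powi ((if i = j + 1 then 1 else 0) - (if i = j then 1 else 0))) * (?z * ?e))"
    using adQ_E_weight[of i m q ?z "zweight j"] has_weight_z[OF q j] i
    by (simp add: ipr_wneg_alpha_zweight)
  consider "j + 1 < i" | "j + 1 = i" | "j = i" | "i + 1 \<le> j" by linarith
  then show ?thesis
  proof cases
    case 1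
    then have "null m q (- (?z * ?e - ?e * ?z))" using z_comm_E_low[OF i(2)] j null_neg by blast
    then show ?thesis using ad 1 by (auto intro: UcmQ_ueq UcmQ_null)
  next
    case 2
    then have "zQ m q i = qcomm q ?z ?e" using zQ_Suc[of j m q] i j by simp
    then have "?e * ?z - sc q * (?z * ?e) = sc (- q) * zQ m q i" by (simp add: reversed_qcomm[OF q])
    then show ?thesis using ad 2 UcmQ_sc[OF UcmQ_z[of i m q]] i by (auto intro: UcmQ_ueq)
  next
    case 3
    obtain i' where i': "i = Suc i'" "1 \<le> i'" using i by (cases i) auto
    have z: "zQ m q i = qcomm q (zQ m q i') ?e" using i i' by (simp add: zQ_Suc)
    have "null m q (serre q (zQ m q i') ?e)" using z_serre[OF q, of i' m] i i' by simp
    moreover have "?e * ?z - sc (q powi (-1)) * (?z * ?e) = sc (- inverse q) * serre q (zQ m q i') ?e"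
      using 3 by (simp add: z qcomm_twisted_comm[OF q] power_int_minus)
    ultimately show ?thesis using ad 3 by (auto intro: UcmQ_ueq UcmQ_null null_mult_left)
  next
    case 4
    then have "null m q (- (?z * ?e - ?e * ?z))" using z_comm_E_high[OF q s i(1)] j null_neg by blast
    then show ?thesis using ad 4 by (auto intro: UcmQ_ueq UcmQ_null)
  qed
qed

lemma adQ_E_UcmQ:
  fixes q :: "'k::field"
  assumes q: "q \<noteq> 0" and s: "q + inverse q \<noteq> 0" and i: "2 \<le> i" "i \<le> m" and V: "V \<in> UcmQ m q"
  shows "adQ m (Gen (E i)) V \<in> UcmQ m q"
proof (rule adQ_stable_UcmQ[OF _ V])
  have i1: "1 \<le> i" using i by simp
  fix v assume v: "v \<in> Ucm m q"
  show "adQ m (Gen (E i)) (abs_free v) \<in> UcmQ m q"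
  proof (rule Ucm_induct_UcmQ[OF v])
    fix c
    have "adQ m (Gen (E i)) (sc c * 1 :: 'k free) = sc c * adQ m (Gen (E i)) 1" by (rule adQ_sc)
    also have "ueq m q \<dots> (sc c * 0)" by (intro ueq_sc adQ_E_one i1 i)
    finally show "adQ m (Gen (E i)) (sc c) \<in> UcmQ m q" using UcmQ_scal[of 0] by (auto intro: UcmQ_ueq)
  next
    fix j assume "1 \<le> j" "j \<le> m"
    then show "adQ m (Gen (E i)) (zQ m q j) \<in> UcmQ m q" by (rule adQ_E_z[OF q s i])
  next
    fix V W
    show "adQ m (Gen (E i)) V \<in> UcmQ m q \<Longrightarrow> adQ m (Gen (E i)) W \<in> UcmQ m q
        \<Longrightarrow> adQ m (Gen (E i)) (V + W) \<in> UcmQ m q"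
      by (simp add: adQ_add UcmQ_add)
    assume "adQ m (Gen (E i)) V \<in> UcmQ m q" "adQ m (Gen (E i)) W \<in> UcmQ m q"
      and "V \<in> UcmQ m q" "W \<in> UcmQ m q"
    moreover have "adQ m (Gen (K (wneg (alpha i)))) V \<in> UcmQ m q"
      using adQ_K_UcmQ[OF q wneg_valid[OF alpha_valid[OF i1 i(2)]] \<open>V \<in> UcmQ m q\<close>] .
    ultimately show "adQ m (Gen (E i)) (V * W) \<in> UcmQ m q"
      using adQ_E_mul[OF i1 i(2), of q V W] by (meson UcmQ_add UcmQ_mul UcmQ_ueq)
  qed
qed

text \<open>Hence every \<open>ad(\<pi>_A(h))\<close>, \<open>h \<in> U_A^(\<ge>0)\<close>, preserves \<open>U_q^(c_m)\<close>; \<open>\<pi>_A\<close> kills \<open>E_1\<close>,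
  the only generator that does not.\<close>

lemma adQ_piA_UcmQ:
  assumes q: "q \<noteq> 0" and s: "q + inverse q \<noteq> 0" and h: "h \<in> Uge m"
  shows "V \<in> UcmQ m q \<Longrightarrow> adQ m (piA h) V \<in> UcmQ m q"
  using h unfolding Uge_def
proof (induction h arbitrary: V rule: subalg.induct)
  case (scal c) then show ?case by (simp add: adQ_Scal UcmQ_sc)
next
  case (gen x)
  then consider (E) i where "x = Gen (E i)" "1 \<le> i" "i \<le> m"
    | (K) mu where "x = Gen (K mu)" "in_root_lattice m mu"
    by blast
  then show ?case
  proof cases
    case E then show ?thesis
      using adQ_E_UcmQ[OF q s _ _ gen.prems, of i] UcmQ_scal[of 0 m q]
      by (cases "i = 1") (auto simp: adQ_Scal)
  next
    case K then show ?thesis using adQ_K_UcmQ[OF q _ gen.prems] by simp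
  qed
next
  case (add x y) then show ?case by (simp add: adQ_Add UcmQ_add)
next
  case (mul x y) then show ?case by (simp add: adQ_Mul)
qed

section \<open>The module-algebra axioms\<close>

text \<open>\<open>ad(\<pi>_A(h))(VW) = \<Sum> ad(\<pi>_A(h_(1)))(V) ad(\<pi>_A(h_(2)))(W)\<close>, by induction over \<open>h\<close>: the
  generators are the twisted Leibniz rules, and products follow from coassociativity of the
  formal coproduct of a product.\<close>

definition ma_term :: "nat \<Rightarrow> 'k::field free \<Rightarrow> 'k free \<Rightarrow> 'k \<times> 'k fexpr \<times> 'k fexpr \<Rightarrow> 'k free" where
  "ma_term m V W t = (case t of (c, h1, h2) \<Rightarrow> sc c * (adQ m (piA h1) V * adQ m (piA h2) W))"

lemma sum_list_swap:
  fixes f :: "'a \<Rightarrow> 'b \<Rightarrow> 'c::comm_monoid_add"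
  shows "sum_list (map (\<lambda>y. sum_list (map (\<lambda>x. f x y) xs)) ys)
       = sum_list (map (\<lambda>x. sum_list (map (\<lambda>y. f x y) ys)) xs)"
proof (induction ys)
  case Nil then show ?case by (induction xs) simp_all
next
  case (Cons y ys) then show ?case
    by (simp add: sum_list_addf[of "\<lambda>x. f x y" "\<lambda>x. sum_list (map (f x) ys)" xs])
qed

lemma ma_identity_Mul:
  fixes q :: "'k::field"
  assumes IH_a: "\<And>V W. ueq m q (adQ m (piA a) (V * W)) (sum_list (map (ma_term m V W) (Delta m a)))"
    and IH_b: "\<And>V W. ueq m q (adQ m (piA b) (V * W)) (sum_list (map (ma_term m V W) (Delta m b)))"
  shows "ueq m q (adQ m (piA (Mul a b)) (V * W)) (sum_list (map (ma_term m V W) (Delta m (Mul a b))))"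
proof -
  let ?A = "\<lambda>y U. adQ m (piA y) U"
  let ?G = "\<lambda>t1 t2. (case t1 of (c, x1, x2) \<Rightarrow> case t2 of (d, y1, y2) \<Rightarrow>
              sc (c * d) * (?A (Mul x1 y1) V * ?A (Mul x2 y2) W))"
  have "adQ m (piA (Mul a b)) (V * W) = ?A a (?A b (V * W))" by (simp add: adQ_Mul)
  also have "ueq m q \<dots> (?A a (sum_list (map (ma_term m V W) (Delta m b))))"
    using IH_b by (rule adQ_cong)
  also have "\<dots> = sum_list (map (\<lambda>t2. ?A a (ma_term m V W t2)) (Delta m b))"
    by (rule adQ_sum)
  also have "ueq m q \<dots> (sum_list (map (\<lambda>t2. sum_list (map (\<lambda>t1. ?G t1 t2) (Delta m a))) (Delta m b)))"
  proof (rule ueq_sum_list)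
    fix t2 assume "t2 \<in> set (Delta m b)"
    obtain d y1 y2 where t2: "t2 = (d, y1, y2)" by (cases t2) auto
    have "?A a (ma_term m V W t2) = sc d * ?A a (?A y1 V * ?A y2 W)"
      by (simp add: t2 ma_term_def adQ_sc)
    also have "ueq m q \<dots> (sc d * sum_list (map (ma_term m (?A y1 V) (?A y2 W)) (Delta m a)))"
      using IH_a by (rule ueq_sc)
    also have "\<dots> = sum_list (map (\<lambda>t1. ?G t1 t2) (Delta m a))"
      unfolding sum_list_const_mult[symmetric]
      by (rule arg_cong[where f = sum_list], rule map_cong[OF HOL.refl])
         (auto simp: ma_term_def t2 adQ_Mul sc_mult mult.assoc sc_sc_comm)
    finally show "ueq m q (?A a (ma_term m V W t2)) (sum_list (map (\<lambda>t1. ?G t1 t2) (Delta m a)))" .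
  qed
  also have "\<dots> = sum_list (map (\<lambda>t1. sum_list (map (\<lambda>t2. ?G t1 t2) (Delta m b))) (Delta m a))"
    by (rule sum_list_swap)
  also have "\<dots> = sum_list (map (ma_term m V W) (Delta m (Mul a b)))"
    by (simp add: sum_list_concat_map map_map o_def ma_term_def case_prod_unfold)
  finally show ?thesis .
qed

lemma adQ_piA_mul:
  fixes q :: "'k::field"
  assumes h: "h \<in> Uge m"
  shows "ueq m q (adQ m (piA h) (V * W)) (sum_list (map (ma_term m V W) (Delta m h)))"
  using h unfolding Uge_def
proof (induction h arbitrary: V W rule: subalg.induct)
  case (scal c) then show ?case by (simp add: ma_term_def adQ_Scal one_def)
next
  case (gen x)
  then consider (E) i where "x = Gen (E i)" "1 \<le> i" "i \<le> m"
    | (K) mu where "x = Gen (K mu)" "in_root_lattice m mu"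
    by blast
  then show ?case
  proof cases
    case E then show ?thesis
      using adQ_E_mul[of i m q V W]
      by (cases "i = 1") (simp_all add: ma_term_def adQ_Scal one_def Delta_gen_def valid_gen_def)
  next
    case K then show ?thesis
      using adQ_K_mul[of m mu q V W] by (simp add: ma_term_def Delta_gen_def valid_gen_def)
  qed
next
  case (add x y) then show ?case by (simp add: adQ_Add ueq_add)
next
  case (mul a b) then show ?case by (intro ma_identity_Mul mul.IH)
qed

lemma adQ_piA_one:
  fixes q :: "'k::field"
  assumes h: "h \<in> Uge m"
  shows "ueq m q (adQ m (piA h) 1) (sc (counit m h))"
  using h unfolding Uge_def
proof (induction h rule: subalg.induct)
  case (scal c) then show ?case by (simp add: adQ_Scal)
next
  case (gen x)
  then consider (E) i where "x = Gen (E i)" "1 \<le> i" "i \<le> m"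
    | (K) mu where "x = Gen (K mu)" "in_root_lattice m mu"
    by blast
  then show ?case
  proof cases
    case E then show ?thesis
      using adQ_E_one[of i m q] by (cases "i = 1") (simp_all add: adQ_Scal counit_gen_def valid_gen_def)
  next
    case K then show ?thesis using adQ_K_one[of m mu q] by (simp add: counit_gen_def valid_gen_def)
  qed
next
  case (add x y) then show ?case by (simp add: adQ_Add sc_add ueq_add)
next
  case (mul a b)
  have "adQ m (piA (Mul a b)) 1 = adQ m (piA a) (adQ m (piA b) 1)" by (simp add: adQ_Mul)
  also have "ueq m q \<dots> (adQ m (piA a) (sc (counit m b) * 1))"
    using mul.IH(2) by (simp add: adQ_cong)
  also have "\<dots> = sc (counit m b) * adQ m (piA a) 1" by (rule adQ_sc)
  also have "ueq m q \<dots> (sc (counit m b) * sc (counit m a))" using mul.IH(1) by (rule ueq_sc)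
  also have "\<dots> = sc (counit m (Mul a b))" by (simp add: sc_mult[symmetric] mult.commute)
  finally show ?case .
qed

text \<open>For \<open>q\<close> not a root of unity, \<open>q + q\<^sup>-\<^sup>1 \<noteq> 0\<close> (otherwise \<open>q\<^sup>2 = -1\<close>, \<open>q\<^sup>4 = 1\<close>).\<close>

lemma q_plus_inverse_nonzero:
  fixes q :: "'k::field"
  assumes "q \<noteq> 0" and "\<forall>n::nat. n > 0 \<longrightarrow> q ^ n \<noteq> 1"
  shows "q + inverse q \<noteq> 0"
proof
  assume "q + inverse q = 0"
  then have "q * q = -1" using assms(1) by (simp add: field_simps add_eq_0_iff)
  then have "q ^ 4 = 1" by (simp add: power4_eq_xxxx)
  then show False using assms(2) by auto
qed

text \<open>The statements about \<open>\<lambda>_A(u \<otimes> v) = ad(\<pi>_A(u))(v)\<close> on representatives: each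
  follows by passing to the free algebra, where \<open>lamA\<close> becomes \<open>adQ \<circ> \<pi>_A\<close>.\<close>

lemma lamA_in_Ucm:
  assumes q: "q \<noteq> 0" and s: "q + inverse q \<noteq> 0" and h: "h \<in> Uge m" and v: "v \<in> Ucm m q"
  shows "\<exists>v' \<in> Ucm m q. Ueq m q (lamA m h v) v'"
proof -
  have "abs_free (lamA m h v) \<in> UcmQ m q"
    unfolding abs_lamA using adQ_piA_UcmQ[OF q s h UcmQ_abs[OF v]] .
  then show ?thesis by (auto simp: UcmQ_def ueq_abs)
qed

lemma lamA_linear_left:
  "Ueq m q (lamA m (Add (smult a h) (smult b h')) v) (Add (smult a (lamA m h v)) (smult b (lamA m h' v)))"
  by (rule Ueq_of_abs) (simp add: abs_lamA smult_def adQ_Add adQ_Mul adQ_Scal)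

lemma lamA_linear_right:
  "Ueq m q (lamA m h (Add (smult a v) (smult b w))) (Add (smult a (lamA m h v)) (smult b (lamA m h w)))"
  by (rule Ueq_of_abs) (simp add: abs_lamA adQ_add adQ_sc)

lemma lamA_Mul: "Ueq m q (lamA m (Mul h h') v) (lamA m h (lamA m h' v))"
  by (rule Ueq_of_abs) (simp add: abs_lamA adQ_Mul)

lemma lamA_one: "Ueq m q (lamA m one v) v"
  by (rule Ueq_of_abs) (simp add: abs_lamA adQ_Scal one_def)

lemma lamA_mul:
  assumes "h \<in> Uge m"
  shows "Ueq m q (lamA m h (Mul v w))
    (esum (map (\<lambda>(c, h1, h2). smult c (Mul (lamA m h1 v) (lamA m h2 w))) (Delta m h)))"
proof -
  have "abs_free (esum (map (\<lambda>(c, h1, h2). smult c (Mul (lamA m h1 v) (lamA m h2 w))) (Delta m h)))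
      = sum_list (map (ma_term m (abs_free v) (abs_free w)) (Delta m h))"
    unfolding abs_esum map_map
    by (rule arg_cong[where f = sum_list], rule map_cong[OF HOL.refl]) (auto simp: ma_term_def abs_lamA)
  then show ?thesis using adQ_piA_mul[OF assms, of q] by (simp add: ueq_abs[symmetric] abs_lamA)
qed

lemma lamA_unit:
  assumes "h \<in> Uge m"
  shows "Ueq m q (lamA m h one) (smult (counit m h) one)"
  using adQ_piA_one[OF assms, of q] by (simp add: ueq_abs[symmetric] abs_lamA)

theorem corollary6p2:
  fixes q :: "'k::field_char_0" and m :: nat
  assumes "alg_closed_field TYPE('k)"
    and "q \<noteq> 0" and "\<forall>n::nat. n > 0 \<longrightarrow> q ^ n \<noteq> 1"
    and "m > 1"
  shows
    \<comment> \<open>Im(lambda_A) is contained in U_q^{c_m}\<close>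
    "(\<forall>h \<in> Uge m. \<forall>v \<in> Ucm m q. \<exists>v' \<in> Ucm m q. Ueq m q (lamA m h v) v')
     \<comment> \<open>bilinearity\<close>
     \<and> (\<forall>h \<in> Uge m. \<forall>h' \<in> Uge m. \<forall>v \<in> Ucm m q. \<forall>a b.
          Ueq m q (lamA m (Add (smult a h) (smult b h')) v)
                  (Add (smult a (lamA m h v)) (smult b (lamA m h' v))))
     \<and> (\<forall>h \<in> Uge m. \<forall>v \<in> Ucm m q. \<forall>w \<in> Ucm m q. \<forall>a b.
          Ueq m q (lamA m h (Add (smult a v) (smult b w)))
                  (Add (smult a (lamA m h v)) (smult b (lamA m h w))))
     \<comment> \<open>module axioms\<close>
     \<and> (\<forall>h \<in> Uge m. \<forall>h' \<in> Uge m. \<forall>v \<in> Ucm m q.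
          Ueq m q (lamA m (Mul h h') v) (lamA m h (lamA m h' v)))
     \<and> (\<forall>v \<in> Ucm m q. Ueq m q (lamA m one v) v)
     \<comment> \<open>module algebra axioms\<close>
     \<and> (\<forall>h \<in> Uge m. \<forall>v \<in> Ucm m q. \<forall>w \<in> Ucm m q.
          Ueq m q (lamA m h (Mul v w))
                  (esum (map (\<lambda>(c, h1, h2). smult c (Mul (lamA m h1 v) (lamA m h2 w))) (Delta m h))))
     \<and> (\<forall>h \<in> Uge m. Ueq m q (lamA m h one) (smult (counit m h) one))"
proof (intro conjI ballI allI)
  have s: "q + inverse q \<noteq> 0" using assms(2,3) by (rule q_plus_inverse_nonzero)
  show "\<exists>v' \<in> Ucm m q. Ueq m q (lamA m h v) v'" if "h \<in> Uge m" "v \<in> Ucm m q" for h v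
    using lamA_in_Ucm[OF assms(2) s that] .
qed (rule lamA_linear_left lamA_linear_right lamA_Mul lamA_one lamA_mul lamA_unit, assumption?)+

end
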